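(* Let $1\le p<\infty$. Let $\Pi=(t_k)_{k\in\mathbb{Z}}$ be a sampling sequence with constants $0<\delta\le\Delta$, and let $\chi$ be a kernel satisfying $(\chi1)$–$(\chi4)$, where $(\chi3)$ holds with $\psi(u)=u$, i.e. $|\chi(x,u)-\chi(x,v)|\le L(x)|u-v|$, with $L$ satisfying $(L1)$, $(L2)$ and $M_p(L):=\int_{\mathbb{R}}L(u)|u|^p\,du<+\infty$. Let $M_2,\theta_0>0$ be such that $\mathcal{T}_w(x)\le M_2w^{-\theta_0}$ for all $x$ and all sufficiently large $w$. Let $0<\alpha\le1$ and $f\in Lip(\alpha,p)$ with constant $C_1>0$. Then for every sufficiently large $w>0$, $$\|S_wf-f\|_p\le\delta^{-1/p}[2m_{0,\Pi}(L)]^{(p-1)/p}\left[\|L\|_1+M_p(L)\right]^{1/p}C_1\frac{1}{w^{\alpha}}+\delta^{-1/p}m_{0,\Pi}(L)C_1\Delta^{1/p}\left(\frac{\Delta}{w}\right)^{\alpha}+M_2\|f\|_p\,w^{-\theta_0}.$$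
   Context: A $\varphi$-function is a continuous non-decreasing $\varphi:[0,\infty)\to[0,\infty)$ with $\varphi(0)=0$, $\varphi(u)>0$ for $u>0$, $\varphi(u)\to\infty$. A sampling sequence $\Pi=(t_k)$: strictly increasing reals, $t_k\to\pm\infty$, with $\delta\le\Delta_k:=t_{k+1}-t_k\le\Delta$. A kernel is $\chi:\mathbb{R}^2\to\mathbb{R}$ with: $(\chi1)$ $k\mapsto\chi(wx-t_k,u)\in\ell^1(\mathbb{Z})$ for all $x,u$, $w>0$; $(\chi2)$ $\chi(x,0)=0$; $(\chi3)$ measurable $L:\mathbb{R}\to[0,\infty)$ and a $\varphi$-function $\psi$ with $|\chi(x,u)-\chi(x,v)|\le L(x)\psi(|u-v|)$; $(\chi4)$ some $\theta_0>0$ with $\mathcal{T}_w(x):=\sup_{u\ne0}\left|\frac1u\sum_k\chi(wx-t_k,u)-1\right|=\mathcal{O}(w^{-\theta_0})$ uniformly in $x$. $(L1)$: $L\in L^1$, bounded near $0$; $(L2)$: some $\beta_0>0$ with $\sup_u\sum_kL(u-t_k)|u-t_k|^{\beta_0}<\infty$. $m_{0,\Pi}(L):=\sup_u\sum_kL(u-t_k)$. Operators: $(S_wf)(x):=\sum_k\chi\!\left(wx-t_k,\frac{w}{\Delta_k}\int_{t_k/w}^{t_{k+1}/w}f(u)\,du\right)$. $\omega_p(f,\delta'):=\sup_{|h|\le\delta'}\|f(\cdot+h)-f(\cdot)\|_p$. $Lip(\alpha,p)$ is the class of $f\in L^p(\mathbb{R})$ for which there is a constant $C_1>0$ with $\omega_p(f,\delta')\le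 C_1(\delta')^{\alpha}$ for all sufficiently small $\delta'>0$. *)

theory Defs
  imports "HOL-Analysis.Analysis"
begin

definition Lp_norm :: "real \<Rightarrow> (real \<Rightarrow> real) \<Rightarrow> ennreal" where
  "Lp_norm p g =
     (let I = (\<integral>\<^sup>+ x. ennreal (\<bar>g x\<bar> powr p) \<partial>lborel)
      in if I = \<infinity> then \<infinity> else ennreal (enn2real I powr (1 / p)))"

definition omega_p :: "real \<Rightarrow> (real \<Rightarrow> real) \<Rightarrow> real \<Rightarrow> ennreal" where
  "omega_p p f d = (SUP h \<in> {h. \<bar>h\<bar> \<le> d}. Lp_norm p (\<lambda>x. f (x + h) - f x))"

definition in_Lp :: "real \<Rightarrow> (real \<Rightarrow> real) \<Rightarrow> bool" where
  "in_Lp p f \<longleftrightarrow> f \<in> borel_measurable lborel \<and> integrable lborel (\<lambda>x. \<bar>f x\<bar> powr p)"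

definition Lip_with :: "real \<Rightarrow> real \<Rightarrow> real \<Rightarrow> (real \<Rightarrow> real) \<Rightarrow> bool" where
  "Lip_with \<alpha> p C1 f \<longleftrightarrow> in_Lp p f \<and>
     (\<exists>\<epsilon>>0. \<forall>d. 0 < d \<and> d < \<epsilon> \<longrightarrow> omega_p p f d \<le> ennreal (C1 * d powr \<alpha>))"

definition sampling_seq :: "(int \<Rightarrow> real) \<Rightarrow> real \<Rightarrow> real \<Rightarrow> bool" where
  "sampling_seq t \<delta> \<Delta> \<longleftrightarrow> 0 < \<delta> \<and> strict_mono t \<and>
     filterlim t at_top at_top \<and> filterlim t at_bot at_bot \<and>
     (\<forall>k. \<delta> \<le> t (k + 1) - t k \<and> t (k + 1) - t k \<le> \<Delta>)"

definition T_w :: "(real \<Rightarrow> real \<Rightarrow> real) \<Rightarrow> (int \<Rightarrow> real) \<Rightarrow> real \<Rightarrow> real \<Rightarrow> ennreal" where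
  "T_w K t w x = (SUP u \<in> UNIV - {0}. ennreal (abs ((1 / u) * (\<Sum>\<^sub>\<infinity>k. K (w * x - t k) u) - 1)))"

definition m0 :: "(int \<Rightarrow> real) \<Rightarrow> (real \<Rightarrow> real) \<Rightarrow> real" where
  "m0 t L = (SUP u. \<Sum>\<^sub>\<infinity>k. L (u - t k))"

definition S_w :: "(real \<Rightarrow> real \<Rightarrow> real) \<Rightarrow> (int \<Rightarrow> real) \<Rightarrow> real \<Rightarrow> (real \<Rightarrow> real) \<Rightarrow> real \<Rightarrow> real" where
  "S_w K t w f x = (\<Sum>\<^sub>\<infinity>k. K (w * x - t k)
      ((w / (t (k + 1) - t k)) * (LINT u:{t k / w .. t (k + 1) / w}|lborel. f u)))"

end

(*
  Pointwise, (chi3) and (chi4) give |S_w f x - f x| <= J1 x + J2 x + M2 w^(-theta0) |f x|, where J1 and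
  J2 are sums over the nodes of L(w x - t_k) times the means over [t_k/w, t_(k+1)/w] of
  |f u - f (u + x - t_k/w)| and of |f (u + x - t_k/w) - f x|.  Jensen's inequality, for these means and
  for the weights L(w x - t_k) of total mass at most m_0(L), brings the p-th power inside.  After the
  substitution y = w x - t_k and Fubini, the L^p norm of J1 is controlled by the integral of L(y) times
  the p-th power of the L^p modulus of f at y/w, which the Lip(alpha,p) condition bounds by
  (C1 w^(-alpha))^p (1 + |y|^p); J2 only involves shifts of size at most Delta/w.  Minkowski's
  inequality adds the three bounds.
*)
theory Submission
  imports Defs
begin

definition enn_powr :: "ennreal \<Rightarrow> real \<Rightarrow> ennreal" where
  "enn_powr x p = (if x = top then top else ennreal (enn2real x powr p))"

lemma enn_powr_ennreal [simp]: "0 \<le> x \<Longrightarrow> enn_powr (ennreal x) p = ennreal (x powr p)"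
  by (simp add: enn_powr_def)

lemma enn_powr_top [simp]: "enn_powr top p = top"
  by (simp add: enn_powr_def)

lemma enn_powr_zero [simp]: "enn_powr 0 p = 0"
  using enn_powr_ennreal[of 0 p] by simp

lemma enn_powr_mono: "0 \<le> p \<Longrightarrow> x \<le> y \<Longrightarrow> enn_powr x p \<le> enn_powr y p"
  by (cases x rule: ennreal_cases; cases y rule: ennreal_cases)
    (auto intro!: ennreal_leI powr_mono2 simp: top_unique)

lemma borel_measurable_enn_powr [measurable]:
  assumes [measurable]: "g \<in> borel_measurable M"
  shows "(\<lambda>x. enn_powr (g x) p) \<in> borel_measurable M"
  unfolding enn_powr_def by measurable

lemma enn_powr_cmult: "0 \<le> c \<Longrightarrow> enn_powr (ennreal c * x) p = ennreal (c powr p) * enn_powr x p"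
  by (cases x rule: ennreal_cases) (auto simp: ennreal_mult[symmetric] powr_mult ennreal_mult_top)

lemma powr_minus_one_mult_self: "0 \<le> (m::real) \<Longrightarrow> m powr (p - 1) * m = m powr p"
  using powr_add[of m "p - 1" 1] by (cases "m = 0") auto

lemma powr_tangent_le:
  fixes p t m :: real
  assumes p: "1 \<le> p" and t: "0 \<le> t" and m: "0 \<le> m"
  shows "p * m powr (p - 1) * t \<le> t powr p + (p - 1) * m powr p"
proof (cases "p = 1 \<or> t = 0 \<or> m = 0")
  case True
  then show ?thesis using p t m by (auto simp: powr_def)
next
  case False
  then have p1: "p > 1" and tm: "t > 0" "m > 0" using p t m by auto
  define q where "q = p / (p - 1)"
  have q1: "q > 1" and pq: "1/p + 1/q = 1" using p1 by (simp_all add: q_def field_simps)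
  have "t * m powr (p - 1) \<le> t powr p / p + (m powr (p - 1)) powr q / q"
    using Youngs_inequality[OF p1 q1 pq t] by simp
  also have "(m powr (p - 1)) powr q = m powr p"
    using p1 by (simp add: powr_powr q_def)
  finally have "p * (t * m powr (p - 1)) \<le> p * (t powr p / p + m powr p / q)"
    using p1 by (intro mult_left_mono) auto
  also have "\<dots> = t powr p + (p - 1) * m powr p"
    using p1 by (simp add: q_def field_simps)
  finally show ?thesis by (simp add: mult_ac)
qed

lemma convex_powr_two:
  fixes p a x y :: real
  assumes p: "1 \<le> p" and a: "0 \<le> a" "a \<le> 1" and xy: "0 \<le> x" "0 \<le> y"
  shows "(a * x + (1 - a) * y) powr p \<le> a * x powr p + (1 - a) * y powr p"
proof -
  define m where "m = a * x + (1 - a) * y"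
  have m0: "0 \<le> m" using a xy by (simp add: m_def)
  have "p * m powr p = p * (m powr (p - 1) * m)"
    by (simp add: powr_minus_one_mult_self[OF m0])
  also have "\<dots> = a * (p * m powr (p - 1) * x) + (1 - a) * (p * m powr (p - 1) * y)"
    by (simp add: m_def algebra_simps)
  also have "\<dots> \<le> a * (x powr p + (p - 1) * m powr p) + (1 - a) * (y powr p + (p - 1) * m powr p)"
    using a xy by (intro add_mono mult_left_mono powr_tangent_le[OF p _ m0]) auto
  finally have "m powr p \<le> a * x powr p + (1 - a) * y powr p"
    by (simp add: algebra_simps)
  then show ?thesis by (simp add: m_def)
qed

lemma powr_add_le_weighted:
  fixes p \<mu> x y :: real
  assumes p: "1 \<le> p" and \<mu>: "0 < \<mu>" "\<mu> < 1" and xy: "0 \<le> x" "0 \<le> y"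
  shows "(x + y) powr p \<le> \<mu> powr (1 - p) * x powr p + (1 - \<mu>) powr (1 - p) * y powr p"
proof -
  have "(x + y) powr p = (\<mu> * (x / \<mu>) + (1 - \<mu>) * (y / (1 - \<mu>))) powr p"
    using \<mu> by simp
  also have "\<dots> \<le> \<mu> * (x / \<mu>) powr p + (1 - \<mu>) * (y / (1 - \<mu>)) powr p"
    using \<mu> xy by (intro convex_powr_two p) auto
  also have "\<dots> = \<mu> powr (1 - p) * x powr p + (1 - \<mu>) powr (1 - p) * y powr p"
    using \<mu> xy by (simp add: powr_divide powr_diff)
  finally show ?thesis .
qed

lemma divide_powr_one_minus_mult:
  fixes c S p :: real
  assumes c: "0 < c" and S: "0 < S"
  shows "(c / S) powr (1 - p) * c powr p = c * S powr (p - 1)"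
proof -
  have "(c / S) powr (1 - p) * c powr p = (c powr (1 - p) * c powr p) / S powr (1 - p)"
    using c S by (simp add: powr_divide)
  also have "c powr (1 - p) * c powr p = c"
    using c by (simp flip: powr_add)
  finally show ?thesis
    using powr_minus_divide[of S "1 - p"] by simp
qed

lemma powr_le_one_plus_powr:
  fixes x a b :: real
  assumes "0 \<le> x" "0 \<le> a" "a \<le> b"
  shows "x powr a \<le> 1 + x powr b"
proof (cases "x \<le> 1")
  case True
  then have "x powr a \<le> 1"
    using assms by (intro powr_le1) auto
  then show ?thesis
    by (simp add: add_increasing2)
next
  case False
  then have "x powr a \<le> x powr b"
    using assms by (intro powr_mono) auto
  then show ?thesis
    by simp
qed

lemma powr_divide_exponent_powr: "p \<noteq> 0 \<Longrightarrow> (x powr (a / p)) powr p = x powr (a::real)"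
  by (simp add: powr_powr)

lemma powr_inverse_root_powr: "p \<noteq> 0 \<Longrightarrow> 0 \<le> x \<Longrightarrow> (x powr - (1 / p)) powr p = 1 / (x::real)"
  by (simp only: powr_powr) (simp add: powr_minus_divide)

section \<open>Minkowski and Jensen inequalities for nonnegative integrals\<close>

lemma Minkowski_nn_integral_powr_pos:
  fixes a b :: "'a \<Rightarrow> ennreal"
  assumes p: "1 \<le> p" and [measurable]: "a \<in> borel_measurable M" "b \<in> borel_measurable M"
    and A: "0 < A" "(\<integral>\<^sup>+x. enn_powr (a x) p \<partial>M) \<le> ennreal (A powr p)"
    and B: "0 < B" "(\<integral>\<^sup>+x. enn_powr (b x) p \<partial>M) \<le> ennreal (B powr p)"
  shows "(\<integral>\<^sup>+x. enn_powr (a x + b x) p \<partial>M) \<le> ennreal ((A + B) powr p)"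
proof -
  define S where "S = A + B"
  \<comment> \<open>the weight for which the convexity bound below becomes \<open>(A + B)\<^sup>p\<close>\<close>
  define \<mu> where "\<mu> = A / S"
  have S: "0 < S" and \<mu>: "0 < \<mu>" "\<mu> < 1" "1 - \<mu> = B / S"
    using A B by (auto simp: \<mu>_def S_def field_simps)
  have pw: "enn_powr (a x + b x) p
      \<le> ennreal (\<mu> powr (1 - p)) * enn_powr (a x) p + ennreal ((1 - \<mu>) powr (1 - p)) * enn_powr (b x) p" for x
  proof (cases "a x = top \<or> b x = top")
    case False
    then obtain y z where "a x = ennreal y" "b x = ennreal z" "0 \<le> y" "0 \<le> z"
      by (metis ennreal_cases top.not_eq_extremum)
    then show ?thesis
      using powr_add_le_weighted[OF p \<mu>(1,2), of y z]
      by (simp add: ennreal_plus[symmetric] ennreal_mult[symmetric] ennreal_leI del: ennreal_plus)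
  next
    case True
    have "0 < \<mu> powr (1 - p)" "0 < (1 - \<mu>) powr (1 - p)"
      using \<mu> by auto
    with True show ?thesis
      by (auto simp: ennreal_mult_top)
  qed
  have "(\<integral>\<^sup>+x. enn_powr (a x + b x) p \<partial>M) \<le> ennreal (\<mu> powr (1 - p)) * (\<integral>\<^sup>+x. enn_powr (a x) p \<partial>M)
      + ennreal ((1 - \<mu>) powr (1 - p)) * (\<integral>\<^sup>+x. enn_powr (b x) p \<partial>M)"
    using pw by (simp add: nn_integral_add[symmetric] nn_integral_cmult[symmetric] nn_integral_mono)
  also have "\<dots> \<le> ennreal (\<mu> powr (1 - p)) * ennreal (A powr p) + ennreal ((1 - \<mu>) powr (1 - p)) * ennreal (B powr p)"
    by (intro add_mono mult_left_mono A(2) B(2) zero_le)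
  also have "\<dots> = ennreal (A * S powr (p - 1) + B * S powr (p - 1))"
    unfolding \<mu>(3) unfolding \<mu>_def using divide_powr_one_minus_mult[OF A(1) S] divide_powr_one_minus_mult[OF B(1) S] A(1) B(1) S
    by (simp add: ennreal_mult[symmetric] ennreal_plus[symmetric] del: ennreal_plus)
  also have "A * S powr (p - 1) + B * S powr (p - 1) = S powr p"
    using powr_minus_one_mult_self[of S p] S by (simp add: S_def algebra_simps)
  finally show ?thesis
    by (simp add: S_def)
qed

lemma Minkowski_nn_integral_powr:
  fixes a b :: "'a \<Rightarrow> ennreal"
  assumes p: "1 \<le> p" and [measurable]: "a \<in> borel_measurable M" "b \<in> borel_measurable M"
    and A: "0 \<le> A" "(\<integral>\<^sup>+x. enn_powr (a x) p \<partial>M) \<le> ennreal (A powr p)"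
    and B: "0 \<le> B" "(\<integral>\<^sup>+x. enn_powr (b x) p \<partial>M) \<le> ennreal (B powr p)"
  shows "(\<integral>\<^sup>+x. enn_powr (a x + b x) p \<partial>M) \<le> ennreal ((A + B) powr p)"
proof -
  define X where "X = (\<integral>\<^sup>+x. enn_powr (a x + b x) p \<partial>M)"
  have X_le: "X \<le> ennreal ((A + B + 2 * e) powr p)" if "e > 0" for e
  proof -
    have "(\<integral>\<^sup>+x. enn_powr (a x) p \<partial>M) \<le> ennreal ((A + e) powr p)"
      using A that p by (intro order.trans[OF A(2)] ennreal_leI powr_mono2) auto
    moreover have "(\<integral>\<^sup>+x. enn_powr (b x) p \<partial>M) \<le> ennreal ((B + e) powr p)"
      using B that p by (intro order.trans[OF B(2)] ennreal_leI powr_mono2) auto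
    ultimately have "X \<le> ennreal ((A + e + (B + e)) powr p)"
      unfolding X_def using A B that by (intro Minkowski_nn_integral_powr_pos[OF p]) auto
    then show ?thesis
      by (simp add: algebra_simps)
  qed
  have "X < \<infinity>"
    using le_less_trans[OF X_le[of 1] ennreal_less_top] by simp
  then obtain x where x: "X = ennreal x" "0 \<le> x"
    by (cases X rule: ennreal_cases) auto
  have "x powr (1 / p) \<le> (A + B) + e" if "e > 0" for e
  proof -
    have "ennreal x \<le> ennreal ((A + B + 2 * (e / 2)) powr p)"
      using X_le[of "e / 2"] that x(1) by simp
    then have "x powr (1 / p) \<le> ((A + B + e) powr p) powr (1 / p)"
      using p x(2) by (intro powr_mono2) (auto simp: ennreal_le_iff)
    also have "\<dots> = A + B + e"
      using p A B that by (simp add: powr_powr)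
    finally show ?thesis
      by simp
  qed
  then have "x powr (1 / p) \<le> A + B"
    by (rule field_le_epsilon)
  then have "(x powr (1 / p)) powr p \<le> (A + B) powr p"
    using p by (intro powr_mono2) auto
  then show ?thesis
    using p x by (simp add: X_def[symmetric] powr_powr ennreal_leI)
qed

lemma nn_integral_powr_tangent_le:
  fixes h g :: "'a \<Rightarrow> ennreal"
  assumes p: "1 \<le> p" and [measurable]: "h \<in> borel_measurable M" "g \<in> borel_measurable M"
    and m: "0 \<le> m" and c: "(\<integral>\<^sup>+x. h x \<partial>M) \<le> ennreal c"
  shows "ennreal (p * m powr (p - 1)) * (\<integral>\<^sup>+x. h x * g x \<partial>M)
    \<le> (\<integral>\<^sup>+x. h x * enn_powr (g x) p \<partial>M) + ennreal ((p - 1) * m powr p) * ennreal c"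
proof -
  have pw: "ennreal (p * m powr (p - 1)) * g x \<le> enn_powr (g x) p + ennreal ((p - 1) * m powr p)" for x
  proof (cases "g x" rule: ennreal_cases)
    case (real y)
    then show ?thesis
      using powr_tangent_le[OF p _ m, of y] p m
      by (simp add: ennreal_mult[symmetric] ennreal_plus[symmetric] ennreal_leI del: ennreal_plus)
  qed simp
  have "ennreal (p * m powr (p - 1)) * (\<integral>\<^sup>+x. h x * g x \<partial>M)
      = (\<integral>\<^sup>+x. h x * (ennreal (p * m powr (p - 1)) * g x) \<partial>M)"
    by (simp add: nn_integral_cmult[symmetric] mult.left_commute)
  also have "\<dots> \<le> (\<integral>\<^sup>+x. h x * enn_powr (g x) p + ennreal ((p - 1) * m powr p) * h x \<partial>M)"
    using pw by (intro nn_integral_mono) (simp add: distrib_left mult_left_mono mult.commute flip: distrib_left)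
  also have "\<dots> = (\<integral>\<^sup>+x. h x * enn_powr (g x) p \<partial>M) + ennreal ((p - 1) * m powr p) * (\<integral>\<^sup>+x. h x \<partial>M)"
    by (simp add: nn_integral_add nn_integral_cmult)
  also have "\<dots> \<le> (\<integral>\<^sup>+x. h x * enn_powr (g x) p \<partial>M) + ennreal ((p - 1) * m powr p) * ennreal c"
    using c by (intro add_left_mono mult_left_mono) auto
  finally show ?thesis .
qed

lemma Jensen_nn_integral_powr:
  fixes h g :: "'a \<Rightarrow> ennreal"
  assumes p: "1 \<le> p" and [measurable]: "h \<in> borel_measurable M" "g \<in> borel_measurable M"
    and c: "0 \<le> c" "(\<integral>\<^sup>+x. h x \<partial>M) \<le> ennreal c"
  shows "enn_powr (\<integral>\<^sup>+x. h x * g x \<partial>M) p \<le> ennreal (c powr (p - 1)) * (\<integral>\<^sup>+x. h x * enn_powr (g x) p \<partial>M)"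
proof -
  define G where "G = (\<integral>\<^sup>+x. h x * g x \<partial>M)"
  define I where "I = (\<integral>\<^sup>+x. h x * enn_powr (g x) p \<partial>M)"
  note tangent = nn_integral_powr_tangent_le[OF p assms(2,3) _ c(2), folded G_def I_def]
  consider "c = 0" | "I = top" "c > 0" | i where "I = ennreal i" "0 \<le> i" "c > 0"
    using c(1) by (cases I rule: ennreal_cases) force+
  then show ?thesis
  proof cases
    case 1
    then have "AE x in M. h x = 0"
      using c(2) by (simp add: nn_integral_0_iff_AE)
    then have "G = 0"
      unfolding G_def by (subst nn_integral_0_iff_AE) (auto elim: AE_mp)
    then show ?thesis by (simp add: G_def)
  next
    case 2
    then show ?thesis by (simp add: I_def ennreal_mult_top)
  next
    case 3
    have "ennreal p * G \<le> I + ennreal ((p - 1) * c)"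
      using tangent[of 1] p c by (simp add: ennreal_mult)
    then obtain gr where gr: "G = ennreal gr" "0 \<le> gr"
      using p 3 by (cases G rule: ennreal_cases) (auto simp: ennreal_mult_top top_unique)
    \<comment> \<open>tangent line of \<open>x\<^sup>p\<close> at the mean value \<open>G / c\<close>\<close>
    define m where "m = gr / c"
    have m: "0 \<le> m" "gr = m * c"
      using gr 3 by (auto simp: m_def)
    have "p * m powr (p - 1) * gr \<le> i + (p - 1) * m powr p * c"
      using tangent[OF m(1)] gr 3 p m
      by (simp add: ennreal_mult[symmetric] ennreal_plus[symmetric] del: ennreal_plus)
    then have "p * (m powr (p - 1) * m) * c \<le> i + (p - 1) * m powr p * c"
      by (simp add: m(2) mult_ac)
    then have "p * m powr p * c \<le> i + (p - 1) * m powr p * c"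
      by (simp add: powr_minus_one_mult_self[OF m(1)])
    then have key: "m powr p * c \<le> i"
      by (simp add: algebra_simps)
    have "gr powr p = m powr p * c * c powr (p - 1)"
      using m 3 powr_minus_one_mult_self[of c p] by (simp add: powr_mult mult_ac)
    also have "\<dots> \<le> c powr (p - 1) * i"
      using key by (simp add: mult.commute mult_right_mono)
    finally show ?thesis
      using gr 3 by (simp add: G_def[symmetric] I_def[symmetric] ennreal_mult[symmetric] ennreal_leI)
  qed
qed

lemma interval_mean_powr_le:
  fixes G :: "real \<Rightarrow> ennreal"
  assumes p: "1 \<le> p" and ab: "a < b" and [measurable]: "G \<in> borel_measurable borel"
  shows "enn_powr (ennreal (1 / (b - a)) * (\<integral>\<^sup>+u. indicator {a..b} u * G u \<partial>lborel)) p
    \<le> ennreal (1 / (b - a)) * (\<integral>\<^sup>+u. indicator {a..b} u * enn_powr (G u) p \<partial>lborel)"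
proof -
  have "enn_powr (\<integral>\<^sup>+u. indicator {a..b} u * G u \<partial>lborel) p
      \<le> ennreal ((b - a) powr (p - 1)) * (\<integral>\<^sup>+u. indicator {a..b} u * enn_powr (G u) p \<partial>lborel)"
    using ab by (intro Jensen_nn_integral_powr[OF p]) (auto simp: emeasure_lborel_Icc_eq)
  then have "enn_powr (ennreal (1 / (b - a)) * (\<integral>\<^sup>+u. indicator {a..b} u * G u \<partial>lborel)) p
      \<le> ennreal ((1 / (b - a)) powr p) * (ennreal ((b - a) powr (p - 1))
        * (\<integral>\<^sup>+u. indicator {a..b} u * enn_powr (G u) p \<partial>lborel))"
    using ab by (simp add: enn_powr_cmult mult_left_mono)
  also have "\<dots> = ennreal (1 / (b - a)) * (\<integral>\<^sup>+u. indicator {a..b} u * enn_powr (G u) p \<partial>lborel)"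
  proof -
    have "ennreal ((1 / (b - a)) powr p) * ennreal ((b - a) powr (p - 1)) = ennreal (1 / (b - a))"
      using ab by (simp add: ennreal_mult[symmetric] powr_divide powr_diff field_simps)
    then show ?thesis
      by (simp add: mult.assoc[symmetric])
  qed
  finally show ?thesis .
qed

lemma nn_integral_lborel_translate:
  fixes F :: "real \<Rightarrow> ennreal"
  assumes "F \<in> borel_measurable borel"
  shows "(\<integral>\<^sup>+u. F (u + c) \<partial>lborel) = (\<integral>\<^sup>+u. F u \<partial>lborel)"
  using nn_integral_real_affine[OF assms, of 1 c] by (simp add: add.commute)

lemma nn_integral_lborel_dilate:
  fixes F :: "real \<Rightarrow> ennreal"
  assumes "F \<in> borel_measurable borel" and w: "0 < w"
  shows "ennreal w * (\<integral>\<^sup>+x. F (w * x - c) \<partial>lborel) = (\<integral>\<^sup>+y. F y \<partial>lborel)"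
  using nn_integral_real_affine[OF assms(1), of w "- c"] w by (simp add: add.commute)

lemma Lp_norm_le_ennreal_iff:
  fixes g :: "real \<Rightarrow> real"
  assumes p: "0 < p" and c: "0 \<le> c"
  shows "Lp_norm p g \<le> ennreal c \<longleftrightarrow> (\<integral>\<^sup>+x. ennreal (\<bar>g x\<bar> powr p) \<partial>lborel) \<le> ennreal (c powr p)"
proof (cases "\<integral>\<^sup>+x. ennreal (\<bar>g x\<bar> powr p) \<partial>lborel" rule: ennreal_cases)
  case (real i)
  have "i powr (1 / p) \<le> c \<longleftrightarrow> i \<le> c powr p"
  proof
    assume "i powr (1 / p) \<le> c"
    then have "(i powr (1 / p)) powr p \<le> c powr p"
      using p by (intro powr_mono2) auto
    then show "i \<le> c powr p"
      using p real by (simp add: powr_powr)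
  next
    assume "i \<le> c powr p"
    then have "i powr (1 / p) \<le> (c powr p) powr (1 / p)"
      using p real by (intro powr_mono2) auto
    then show "i powr (1 / p) \<le> c"
      using p c by (simp add: powr_powr)
  qed
  then show ?thesis
    using real c by (simp add: Lp_norm_def ennreal_le_iff)
qed (simp add: Lp_norm_def top_unique)

lemma in_Lp_nn_integral_eq:
  assumes p: "0 < p" and f: "in_Lp p f"
  shows "(\<integral>\<^sup>+x. ennreal (\<bar>f x\<bar> powr p) \<partial>lborel) = ennreal (enn2real (Lp_norm p f) powr p)"
proof -
  define i where "i = integral\<^sup>L lborel (\<lambda>x. \<bar>f x\<bar> powr p)"
  have "(\<integral>\<^sup>+x. ennreal (\<bar>f x\<bar> powr p) \<partial>lborel) = ennreal i" and i: "0 \<le> i"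
    using f by (auto simp: in_Lp_def i_def intro: nn_integral_eq_integral)
  with p show ?thesis
    by (simp add: Lp_norm_def powr_powr)
qed

lemma in_Lp_scaled_nn_integral_eq:
  assumes p: "0 < p" and f: "in_Lp p f" and c: "0 \<le> c"
  shows "(\<integral>\<^sup>+x. enn_powr (ennreal (c * \<bar>f x\<bar>)) p \<partial>lborel) = ennreal ((c * enn2real (Lp_norm p f)) powr p)"
proof -
  have [measurable]: "f \<in> borel_measurable borel"
    using f by (simp add: in_Lp_def)
  have "enn_powr (ennreal (c * \<bar>f x\<bar>)) p = ennreal (c powr p) * ennreal (\<bar>f x\<bar> powr p)" for x
    using c by (subst enn_powr_ennreal) (auto simp: powr_mult ennreal_mult)
  then have "(\<integral>\<^sup>+x. enn_powr (ennreal (c * \<bar>f x\<bar>)) p \<partial>lborel)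
      = ennreal (c powr p) * (\<integral>\<^sup>+x. ennreal (\<bar>f x\<bar> powr p) \<partial>lborel)"
    by (simp add: nn_integral_cmult)
  also have "\<dots> = ennreal ((c * enn2real (Lp_norm p f)) powr p)"
    using c by (simp add: in_Lp_nn_integral_eq[OF p f] powr_mult ennreal_mult)
  finally show ?thesis .
qed

lemma in_Lp_set_integrable_Icc:
  assumes p: "1 \<le> p" and f: "in_Lp p f"
  shows "set_integrable lborel {a..b} f"
  unfolding set_integrable_def
proof (rule Bochner_Integration.integrable_bound)
  have [measurable]: "f \<in> borel_measurable borel"
    using f by (simp add: in_Lp_def)
  have "integrable lborel (\<lambda>u. \<bar>f u\<bar> powr p * indicator {a..b} u :: real)"
    using f by (intro integrable_real_mult_indicator) (auto simp: in_Lp_def)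
  moreover have "integrable lborel (\<lambda>u. indicator {a..b} u :: real)"
    by (simp add: integrable_indicator_iff emeasure_lborel_Icc_eq less_top[symmetric])
  ultimately show "integrable lborel (\<lambda>u. indicator {a..b} u * (1 + \<bar>f u\<bar> powr p) :: real)"
    by (simp add: distrib_left mult.commute)
  show "(\<lambda>x. indicat_real {a..b} x *\<^sub>R f x) \<in> borel_measurable lborel"
    by measurable
  show "AE x in lborel. norm (indicat_real {a..b} x *\<^sub>R f x) \<le> norm (indicator {a..b} x * (1 + \<bar>f x\<bar> powr p) :: real)"
    using powr_le_one_plus_powr[of "\<bar>f _\<bar>" 1 p] p by (auto simp: indicator_def)
qed

lemma interval_average_dist_le:
  fixes f :: "real \<Rightarrow> real"
  assumes ab: "a < b" and f: "set_integrable lborel {a..b} f"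
  shows "ennreal \<bar>(1 / (b - a)) * (LINT u:{a..b}|lborel. f u) - y\<bar>
    \<le> ennreal (1 / (b - a)) * (\<integral>\<^sup>+u. indicator {a..b} u * ennreal \<bar>f u - y\<bar> \<partial>lborel)"
proof -
  have const: "set_integrable lborel {a..b} (\<lambda>u. y)"
    by (simp add: set_integrable_def integrable_indicator_iff emeasure_lborel_Icc_eq less_top[symmetric])
  have "(LINT u:{a..b}|lborel. y) = (b - a) * y"
    using ab by (subst set_integral_const) (auto simp: emeasure_lborel_Icc_eq)
  then have "(LINT u:{a..b}|lborel. f u) - (b - a) * y = (LINT u:{a..b}|lborel. f u - y)"
    by (simp add: set_integral_diff[OF f const])
  then have "\<bar>(1 / (b - a)) * (LINT u:{a..b}|lborel. f u) - y\<bar> = (1 / (b - a)) * \<bar>LINT u:{a..b}|lborel. f u - y\<bar>"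
    using ab by (simp add: field_simps abs_divide)
  then have "ennreal \<bar>(1 / (b - a)) * (LINT u:{a..b}|lborel. f u) - y\<bar>
      = ennreal (1 / (b - a)) * ennreal \<bar>LINT u:{a..b}|lborel. f u - y\<bar>"
    using ab by (simp add: ennreal_mult[symmetric])
  also have "\<dots> \<le> ennreal (1 / (b - a)) * (\<integral>\<^sup>+u. ennreal (norm (indicator {a..b} u *\<^sub>R (f u - y))) \<partial>lborel)"
    using integral_norm_bound_ennreal[OF set_integral_diff(1)[OF f const, unfolded set_integrable_def]]
    by (intro mult_left_mono) (simp_all add: set_lebesgue_integral_def)
  also have "(\<integral>\<^sup>+u. ennreal (norm (indicator {a..b} u *\<^sub>R (f u - y))) \<partial>lborel)
      = (\<integral>\<^sup>+u. indicator {a..b} u * ennreal \<bar>f u - y\<bar> \<partial>lborel)"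
    by (intro nn_integral_cong) (auto simp: indicator_def)
  finally show ?thesis .
qed

lemma nn_integral_count_space_eq_infsum:
  fixes g :: "'a \<Rightarrow> real"
  assumes "\<And>k. 0 \<le> g k" and "g summable_on UNIV"
  shows "(\<integral>\<^sup>+k. ennreal (g k) \<partial>count_space UNIV) = ennreal (\<Sum>\<^sub>\<infinity>k. g k)"
proof -
  have "Infinite_Set_Sum.abs_summable_on g UNIV"
    using assms abs_summable_equivalent by fastforce
  then show ?thesis
    using assms by (simp add: nn_integral_conv_infsetsum infsetsum_infsum)
qed

lemma summable_on_if_nn_integral_count_space_finite:
  fixes g :: "'a \<Rightarrow> real"
  assumes "\<And>k. 0 \<le> g k" and "(\<integral>\<^sup>+k. ennreal (g k) \<partial>count_space UNIV) < \<infinity>"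
  shows "g summable_on UNIV"
proof -
  have "integrable (count_space UNIV) g"
    using assms by (intro integrableI_bounded) auto
  then have "Infinite_Set_Sum.abs_summable_on g UNIV"
    by (simp add: Infinite_Set_Sum.abs_summable_on_def)
  then have "(\<lambda>k. norm (g k)) summable_on UNIV"
    using abs_summable_equivalent by blast
  then show ?thesis
    using assms by simp
qed

lemma infsum_nonneg_ge_term:
  fixes g :: "'a \<Rightarrow> real"
  assumes "\<And>k. 0 \<le> g k" and "g summable_on UNIV"
  shows "g j \<le> (\<Sum>\<^sub>\<infinity>k. g k)"
  using infsum_mono_neutral[of g "{j}" g UNIV] assms by auto

lemma borel_measurable_nn_integral_count_space:
  fixes F :: "'b::countable \<Rightarrow> 'a \<Rightarrow> ennreal"
  assumes [measurable]: "\<And>k. F k \<in> borel_measurable M"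
  shows "(\<lambda>x. \<integral>\<^sup>+k. F k x \<partial>count_space UNIV) \<in> borel_measurable M"
proof -
  have "(\<lambda>y. F (snd y) (fst y)) \<in> borel_measurable (M \<Otimes>\<^sub>M count_space UNIV)"
    by (rule measurable_compose_countable[where f="\<lambda>k y. F k (fst y)"]) auto
  then show ?thesis
    using sigma_finite_measure.borel_measurable_nn_integral[OF sigma_finite_measure_count_space_countable,
        of UNIV "\<lambda>x k. F k x" M]
    by (simp add: case_prod_beta')
qed

section \<open>Sampling sequences and translates of the Lipschitz bound\<close>

lemma sampling_seqD:
  assumes "sampling_seq t \<delta> \<Delta>"
  shows "0 < \<delta>" "\<delta> \<le> \<Delta>" "strict_mono t" "\<delta> \<le> t (k + 1) - t k" "t (k + 1) - t k \<le> \<Delta>"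
  using assms by (auto simp: sampling_seq_def dest: spec[of _ 0])

lemma sampling_seq_spacing:
  assumes "sampling_seq t \<delta> \<Delta>"
  shows "real n * \<delta> \<le> t (k + int n) - t k"
proof (induction n)
  case (Suc n)
  have "\<delta> \<le> t (k + int n + 1) - t (k + int n)"
    using sampling_seqD(4)[OF assms] .
  then show ?case using Suc by (simp add: algebra_simps)
qed simp

lemma sampling_seq_close_nodes:
  assumes "sampling_seq t \<delta> \<Delta>"
  obtains n :: nat where "\<And>u j k. \<bar>u - t j\<bar> < 1 \<Longrightarrow> \<bar>u - t k\<bar> < 1 \<Longrightarrow> k \<in> {j - int n .. j + int n}"
proof
  define n where "n = nat \<lceil>2 / \<delta>\<rceil>"
  have "k - j \<le> int n" if "\<bar>u - t j\<bar> < 1" "\<bar>u - t k\<bar> < 1" for u j k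
  proof (cases "j \<le> k")
    case True
    then obtain i where k: "k = j + int i"
      using zle_iff_zadd by blast
    have "real i * \<delta> < 2"
      using sampling_seq_spacing[OF assms, of i j] that unfolding k by linarith
    then have "real i < 2 / \<delta>"
      using sampling_seqD(1)[OF assms] by (simp add: field_simps)
    then have "real i \<le> real n"
      unfolding n_def by linarith
    then show ?thesis using k by simp
  qed simp
  then show "k \<in> {j - int n .. j + int n}" if "\<bar>u - t j\<bar> < 1" "\<bar>u - t k\<bar> < 1" for u j k
    using that by fastforce
qed

lemma sampling_seq_close_nodes_bounded:
  assumes "sampling_seq t \<delta> \<Delta>"
  obtains n :: nat where "\<And>u. emeasure (count_space UNIV) {k. \<bar>u - t k\<bar> < 1} \<le> of_nat n"
proof -
  obtain n :: nat where close: "\<And>u j k. \<bar>u - t j\<bar> < 1 \<Longrightarrow> \<bar>u - t k\<bar> < 1 \<Longrightarrow> k \<in> {j - int n .. j + int n}"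
    using sampling_seq_close_nodes[OF assms] by blast
  have "emeasure (count_space UNIV) {k. \<bar>u - t k\<bar> < 1} \<le> of_nat (2 * n + 1)" for u
  proof (cases "{k. \<bar>u - t k\<bar> < 1} = {}")
    case False
    then obtain j where "\<bar>u - t j\<bar> < 1"
      by blast
    then have "emeasure (count_space UNIV) {k. \<bar>u - t k\<bar> < 1} \<le> emeasure (count_space UNIV) {j - int n .. j + int n}"
      using close by (intro emeasure_mono) auto
    also have "\<dots> = of_nat (2 * n + 1)"
    proof -
      have "card {j - int n .. j + int n} = 2 * n + 1"
        by simp
      then show ?thesis
        by simp
    qed
    finally show ?thesis .
  qed simp
  then show ?thesis
    using that by blast
qed

lemma sampling_intervals_cover_once:
  assumes samp: "sampling_seq t \<delta> \<Delta>" and w: "0 < w" and u: "u \<notin> range (\<lambda>k. t k / w)"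
  shows "(\<integral>\<^sup>+k. indicator {t k / w .. t (k + 1) / w} u \<partial>count_space UNIV) \<le> 1"
proof -
  define N where "N = {k. u \<in> {t k / w .. t (k + 1) / w}}"
  have inside: "t k < w * u \<and> w * u < t (k + 1)" if "k \<in> N" for k
  proof -
    have "t k / w < u" "u < t (k + 1) / w"
      using that u by (auto simp: N_def order.order_iff_strict)
    then show ?thesis using w by (simp add: field_simps)
  qed
  have "j = k" if "j \<in> N" "k \<in> N" for j k
  proof (rule ccontr)
    assume "j \<noteq> k"
    then have "t (min j k + 1) \<le> t (max j k)"
      using sampling_seqD(3)[OF samp] by (simp add: strict_mono_less_eq)
    then show False
      using inside[OF that(1)] inside[OF that(2)] by (cases "j \<le> k") (simp_all add: min_def max_def)
  qed
  then have "N = {} \<or> (\<exists>k. N = {k})"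
    by blast
  then have "emeasure (count_space UNIV) N \<le> 1"
    by auto
  moreover have "(\<lambda>k. indicator {t k / w .. t (k + 1) / w} u :: ennreal) = indicator N"
    by (auto simp: N_def indicator_def)
  ultimately show ?thesis
    by simp
qed

context
  fixes t :: "int \<Rightarrow> real" and \<delta> \<Delta> :: real and L :: "real \<Rightarrow> real"
  assumes samp: "sampling_seq t \<delta> \<Delta>"
    and L_nonneg: "\<And>x. 0 \<le> L x"
    and L1_bdd: "\<exists>r>0. \<exists>B. \<forall>x. \<bar>x\<bar> < r \<longrightarrow> L x \<le> B"
    and L2: "\<exists>\<beta>0>0. \<exists>B. \<forall>u. (\<lambda>k. L (u - t k) * \<bar>u - t k\<bar> powr \<beta>0) summable_on UNIV
                          \<and> (\<Sum>\<^sub>\<infinity>k. L (u - t k) * \<bar>u - t k\<bar> powr \<beta>0) \<le> B"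
begin

(* (L1) bounds L near 0, the moment condition (L2) bounds it away from 0. *)
lemma Lipschitz_bound_bounded:
  obtains Lm where "\<And>x. L x \<le> Lm"
proof -
  obtain r B0 where r: "r > 0" "\<And>x. \<bar>x\<bar> < r \<Longrightarrow> L x \<le> B0"
    using L1_bdd by blast
  obtain \<beta> B where \<beta>: "\<beta> > 0" and sB: "\<And>u. (\<lambda>k. L (u - t k) * \<bar>u - t k\<bar> powr \<beta>) summable_on UNIV"
    "\<And>u. (\<Sum>\<^sub>\<infinity>k. L (u - t k) * \<bar>u - t k\<bar> powr \<beta>) \<le> B"
    using L2 by blast
  have moment: "L x * \<bar>x\<bar> powr \<beta> \<le> B" for x
    using infsum_nonneg_ge_term[OF _ sB(1), of "x + t 0" 0] sB(2)[of "x + t 0"] L_nonneg by simp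
  have "L x \<le> max B0 (B / r powr \<beta>)" for x
  proof (cases "\<bar>x\<bar> < r")
    case False
    then have "r powr \<beta> \<le> \<bar>x\<bar> powr \<beta>" "0 < r powr \<beta>"
      using r \<beta> by (auto intro!: powr_mono2)
    then have "L x * r powr \<beta> \<le> B"
      using moment[of x] L_nonneg[of x] by (meson mult_left_mono order.trans)
    then have "L x \<le> B / r powr \<beta>"
      using \<open>0 < r powr \<beta>\<close> by (simp add: pos_le_divide_eq)
    then show ?thesis
      by simp
  qed (use r in fastforce)
  then show ?thesis
    using that by blast
qed

(* Away from u the moment condition (L2) dominates L (u - t k); near u there are boundedly many nodes. *)
lemma translates_sum_bounded:
  obtains M where "M < \<infinity>" "\<And>u. (\<integral>\<^sup>+k. ennreal (L (u - t k)) \<partial>count_space UNIV) \<le> M"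
proof -
  obtain \<beta> B where \<beta>: "\<beta> > 0" and sB: "\<And>u. (\<lambda>k. L (u - t k) * \<bar>u - t k\<bar> powr \<beta>) summable_on UNIV"
    "\<And>u. (\<Sum>\<^sub>\<infinity>k. L (u - t k) * \<bar>u - t k\<bar> powr \<beta>) \<le> B"
    using L2 by blast
  obtain Lm where Lm: "\<And>x. L x \<le> Lm"
    using Lipschitz_bound_bounded by blast
  obtain n :: nat where close: "\<And>u. emeasure (count_space UNIV) {k. \<bar>u - t k\<bar> < 1} \<le> of_nat n"
    using sampling_seq_close_nodes_bounded[OF samp] by blast
  have "(\<integral>\<^sup>+k. ennreal (L (u - t k)) \<partial>count_space UNIV) \<le> ennreal B + ennreal Lm * of_nat n" for u
  proof -
    define N where "N = {k. \<bar>u - t k\<bar> < 1}"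
    have split: "ennreal (L (u - t k)) \<le> ennreal (L (u - t k) * \<bar>u - t k\<bar> powr \<beta>) + ennreal Lm * indicator N k" for k
    proof (cases "k \<in> N")
      case False
      then have "1 \<le> \<bar>u - t k\<bar> powr \<beta>"
        using \<beta> by (simp add: N_def ge_one_powr_ge_zero)
      then have "L (u - t k) \<le> L (u - t k) * \<bar>u - t k\<bar> powr \<beta>"
        using L_nonneg[of "u - t k"] by (simp add: mult_le_cancel_left1)
      then show ?thesis
        by (simp add: ennreal_leI add_increasing2)
    qed (simp add: Lm ennreal_leI add_increasing)
    have "(\<integral>\<^sup>+k. ennreal (L (u - t k)) \<partial>count_space UNIV)
        \<le> (\<integral>\<^sup>+k. ennreal (L (u - t k) * \<bar>u - t k\<bar> powr \<beta>) + ennreal Lm * indicator N k \<partial>count_space UNIV)"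
      by (intro nn_integral_mono split)
    also have "\<dots> = (\<integral>\<^sup>+k. ennreal (L (u - t k) * \<bar>u - t k\<bar> powr \<beta>) \<partial>count_space UNIV)
        + ennreal Lm * emeasure (count_space UNIV) N"
      by (simp add: nn_integral_add nn_integral_cmult_indicator)
    also have "\<dots> \<le> ennreal B + ennreal Lm * of_nat n"
      using sB(2)[of u] L_nonneg close[of u] unfolding N_def
      by (intro add_mono mult_left_mono) (simp_all add: nn_integral_count_space_eq_infsum[OF _ sB(1)] ennreal_leI)
    finally show ?thesis .
  qed
  then show ?thesis
    using that[of "ennreal B + ennreal Lm * of_nat n"] by (simp add: ennreal_mult_less_top of_nat_less_top)
qed

lemma translates_summable: "(\<lambda>k. L (u - t k)) summable_on UNIV"
proof -
  obtain M where M: "M < \<infinity>" "\<And>u. (\<integral>\<^sup>+k. ennreal (L (u - t k)) \<partial>count_space UNIV) \<le> M"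
    using translates_sum_bounded by blast
  show ?thesis
    using L_nonneg le_less_trans[OF M(2) M(1)] by (rule summable_on_if_nn_integral_count_space_finite)
qed

lemma translates_infsum_le_m0: "(\<Sum>\<^sub>\<infinity>k. L (u - t k)) \<le> m0 t L"
proof -
  obtain M where M: "M < \<infinity>" "\<And>u. (\<integral>\<^sup>+k. ennreal (L (u - t k)) \<partial>count_space UNIV) \<le> M"
    using translates_sum_bounded by blast
  have "(\<Sum>\<^sub>\<infinity>k. L (u - t k)) \<le> enn2real M" for u
  proof -
    have "enn2real (ennreal (\<Sum>\<^sub>\<infinity>k. L (u - t k))) \<le> enn2real M"
      using M(2)[of u] M(1)
      by (intro enn2real_mono) (auto simp: nn_integral_count_space_eq_infsum[OF L_nonneg translates_summable])
    then show ?thesis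
      using L_nonneg by (simp add: infsum_nonneg)
  qed
  then show ?thesis
    unfolding m0_def by (intro cSUP_upper bdd_aboveI2) auto
qed

lemma translates_sum_le_m0:
  "(\<integral>\<^sup>+k. ennreal (L (u - t k)) \<partial>count_space UNIV) \<le> ennreal (m0 t L)"
  using translates_infsum_le_m0[of u]
  by (simp add: nn_integral_count_space_eq_infsum[OF L_nonneg translates_summable] ennreal_leI)

lemma m0_nonneg: "0 \<le> m0 t L"
  using translates_infsum_le_m0[of 0] infsum_nonneg[of UNIV "\<lambda>k. L (0 - t k)"] L_nonneg by simp

end

section \<open>The Lipschitz class\<close>

lemma shift_integral_multiple_le:
  fixes f :: "real \<Rightarrow> real"
  assumes p: "1 \<le> p" and [measurable]: "f \<in> borel_measurable borel" and c: "0 \<le> c"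
    and h: "(\<integral>\<^sup>+u. ennreal (\<bar>f (u + h) - f u\<bar> powr p) \<partial>lborel) \<le> ennreal (c powr p)"
  shows "(\<integral>\<^sup>+u. ennreal (\<bar>f (u + real n * h) - f u\<bar> powr p) \<partial>lborel) \<le> ennreal ((real n * c) powr p)"
proof (induction n)
  case (Suc n)
  define a where "a u = ennreal \<bar>f (u + real n * h + h) - f (u + real n * h)\<bar>" for u
  define b where "b u = ennreal \<bar>f (u + real n * h) - f u\<bar>" for u
  have [measurable]: "a \<in> borel_measurable lborel" "b \<in> borel_measurable lborel"
    unfolding a_def[abs_def] b_def[abs_def] by measurable
  have "(\<integral>\<^sup>+u. enn_powr (a u) p \<partial>lborel) = (\<integral>\<^sup>+u. ennreal (\<bar>f (u + h) - f u\<bar> powr p) \<partial>lborel)"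
    unfolding a_def
    by (simp add: nn_integral_lborel_translate[where F="\<lambda>u. ennreal (\<bar>f (u + h) - f u\<bar> powr p)"])
  then have ab: "(\<integral>\<^sup>+u. enn_powr (a u + b u) p \<partial>lborel) \<le> ennreal ((c + real n * c) powr p)"
    using Suc.IH c h unfolding b_def
    by (intro Minkowski_nn_integral_powr[OF p]) auto
  have pw: "ennreal (\<bar>f (u + real (Suc n) * h) - f u\<bar> powr p) \<le> enn_powr (a u + b u) p" for u
  proof -
    have "\<bar>f (u + real (Suc n) * h) - f u\<bar>
        \<le> \<bar>f (u + real n * h + h) - f (u + real n * h)\<bar> + \<bar>f (u + real n * h) - f u\<bar>"
      by (simp add: algebra_simps)
    then have "ennreal \<bar>f (u + real (Suc n) * h) - f u\<bar> \<le> a u + b u"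
      unfolding a_def b_def by (simp add: ennreal_leI flip: ennreal_plus)
    then have "enn_powr (ennreal \<bar>f (u + real (Suc n) * h) - f u\<bar>) p \<le> enn_powr (a u + b u) p"
      using p by (intro enn_powr_mono) auto
    then show ?thesis
      by simp
  qed
  have "(\<integral>\<^sup>+u. ennreal (\<bar>f (u + real (Suc n) * h) - f u\<bar> powr p) \<partial>lborel)
      \<le> (\<integral>\<^sup>+u. enn_powr (a u + b u) p \<partial>lborel)"
    by (intro nn_integral_mono pw)
  also note ab
  finally show ?case
    by (simp add: algebra_simps)
qed simp

lemma large_shift_factor_le:
  fixes \<epsilon> w \<alpha> y :: real
  assumes \<epsilon>: "0 < \<epsilon>" and w: "4 / \<epsilon> \<le> w" and \<alpha>: "\<alpha> \<le> 1"
  shows "(4 / \<epsilon>) powr (1 - \<alpha>) * \<bar>y / w\<bar> \<le> w powr (- \<alpha>) * \<bar>y\<bar>"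
proof -
  have w_pos: "0 < w"
    using w \<epsilon> divide_pos_pos[of 4 \<epsilon>] by linarith
  have "(4 / \<epsilon>) powr (1 - \<alpha>) * (1 / w) \<le> w powr (1 - \<alpha>) * (1 / w)"
    using w w_pos \<alpha> \<epsilon> by (intro mult_right_mono powr_mono2) auto
  also have "\<dots> = w powr (- \<alpha>)"
    using w_pos by (simp add: powr_diff powr_minus_divide)
  finally have "(4 / \<epsilon>) powr (1 - \<alpha>) * (1 / w) * \<bar>y\<bar> \<le> w powr (- \<alpha>) * \<bar>y\<bar>"
    by (rule mult_right_mono) simp
  then show ?thesis
    using w_pos by (simp add: abs_divide)
qed

context
  fixes p \<alpha> C1 :: real and f :: "real \<Rightarrow> real"
  assumes p: "1 \<le> p" and \<alpha>: "0 < \<alpha>" "\<alpha> \<le> 1" and C1: "0 < C1"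
    and f: "Lip_with \<alpha> p C1 f"
begin

lemma Lip_with_measurable: "f \<in> borel_measurable borel"
  using f by (simp add: Lip_with_def in_Lp_def)

lemma Lip_with_small_shift_le:
  obtains \<epsilon> where "\<epsilon> > 0" "\<And>h. \<bar>h\<bar> < \<epsilon> \<Longrightarrow>
    (\<integral>\<^sup>+u. ennreal (\<bar>f (u + h) - f u\<bar> powr p) \<partial>lborel) \<le> ennreal ((C1 * \<bar>h\<bar> powr \<alpha>) powr p)"
proof -
  obtain \<epsilon> where \<epsilon>: "\<epsilon> > 0" "\<And>d. 0 < d \<Longrightarrow> d < \<epsilon> \<Longrightarrow> omega_p p f d \<le> ennreal (C1 * d powr \<alpha>)"
    using f unfolding Lip_with_def by blast
  have "(\<integral>\<^sup>+u. ennreal (\<bar>f (u + h) - f u\<bar> powr p) \<partial>lborel) \<le> ennreal ((C1 * \<bar>h\<bar> powr \<alpha>) powr p)"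
    if h: "\<bar>h\<bar> < \<epsilon>" "h \<noteq> 0" for h
  proof -
    have "Lp_norm p (\<lambda>x. f (x + h) - f x) \<le> omega_p p f \<bar>h\<bar>"
      unfolding omega_p_def by (rule SUP_upper) simp
    also have "\<dots> \<le> ennreal (C1 * \<bar>h\<bar> powr \<alpha>)"
      using \<epsilon>(2)[of "\<bar>h\<bar>"] h by simp
    finally show ?thesis
      using p C1 by (subst (asm) Lp_norm_le_ennreal_iff) auto
  qed
  then show ?thesis
    using that[OF \<epsilon>(1)] by fastforce
qed

lemma Lip_with_large_shift_le:
  assumes \<epsilon>: "\<epsilon> > 0" and small: "\<And>h. \<bar>h\<bar> < \<epsilon> \<Longrightarrow>
    (\<integral>\<^sup>+u. ennreal (\<bar>f (u + h) - f u\<bar> powr p) \<partial>lborel) \<le> ennreal ((C1 * \<bar>h\<bar> powr \<alpha>) powr p)"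
    and h: "\<epsilon> \<le> \<bar>h\<bar>"
  shows "(\<integral>\<^sup>+u. ennreal (\<bar>f (u + h) - f u\<bar> powr p) \<partial>lborel)
    \<le> ennreal ((C1 * (4 / \<epsilon>) powr (1 - \<alpha>) * \<bar>h\<bar>) powr p)"
proof -
  \<comment> \<open>split \<open>h\<close> into \<open>n \<le> 4 \<bar>h\<bar> / \<epsilon>\<close> steps of length below \<open>\<epsilon>\<close>\<close>
  define n where "n = nat \<lceil>2 * \<bar>h\<bar> / \<epsilon>\<rceil>"
  have two: "2 \<le> 2 * \<bar>h\<bar> / \<epsilon>"
    using h \<epsilon> by (simp add: field_simps)
  have n_ge: "2 * \<bar>h\<bar> / \<epsilon> \<le> real n" and n_le: "real n \<le> 4 * \<bar>h\<bar> / \<epsilon>"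
    using two unfolding n_def by linarith+
  have n_pos: "0 < real n"
    using n_ge two by linarith
  define h' where "h' = h / real n"
  have h': "real n * h' = h" "\<bar>h'\<bar> = \<bar>h\<bar> / real n" "\<bar>h'\<bar> < \<epsilon>"
    using n_pos n_ge \<epsilon> h by (auto simp: h'_def abs_divide field_simps)
  have "(\<integral>\<^sup>+u. ennreal (\<bar>f (u + h) - f u\<bar> powr p) \<partial>lborel)
      \<le> ennreal ((real n * (C1 * \<bar>h'\<bar> powr \<alpha>)) powr p)"
    using shift_integral_multiple_le[OF p Lip_with_measurable _ small[OF h'(3)], of n] C1 h'(1) by simp
  also have "\<dots> \<le> ennreal ((C1 * (4 / \<epsilon>) powr (1 - \<alpha>) * \<bar>h\<bar>) powr p)"
  proof (intro ennreal_leI powr_mono2)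
    have "real n * \<bar>h'\<bar> powr \<alpha> = real n powr (1 - \<alpha>) * \<bar>h\<bar> powr \<alpha>"
      using n_pos h \<epsilon> by (simp add: h'(2) powr_divide powr_diff)
    also have "\<dots> \<le> (4 / \<epsilon> * \<bar>h\<bar>) powr (1 - \<alpha>) * \<bar>h\<bar> powr \<alpha>"
      using n_le n_pos \<alpha> by (intro mult_right_mono powr_mono2) auto
    also have "\<dots> = (4 / \<epsilon>) powr (1 - \<alpha>) * (\<bar>h\<bar> powr (1 - \<alpha>) * \<bar>h\<bar> powr \<alpha>)"
      using \<epsilon> powr_mult[of "4 / \<epsilon>" "\<bar>h\<bar>" "1 - \<alpha>"] by simp
    also have "\<bar>h\<bar> powr (1 - \<alpha>) * \<bar>h\<bar> powr \<alpha> = \<bar>h\<bar>"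
      using \<epsilon> h by (simp flip: powr_add)
    finally show "real n * (C1 * \<bar>h'\<bar> powr \<alpha>) \<le> C1 * (4 / \<epsilon>) powr (1 - \<alpha>) * \<bar>h\<bar>"
      using C1 by (simp add: mult.left_commute mult.assoc)
  qed (use p C1 in auto)
  finally show ?thesis .
qed

lemma Lip_with_scaled_shift_bound:
  assumes \<epsilon>: "\<epsilon> > 0" and small: "\<And>h. \<bar>h\<bar> < \<epsilon> \<Longrightarrow>
    (\<integral>\<^sup>+u. ennreal (\<bar>f (u + h) - f u\<bar> powr p) \<partial>lborel) \<le> ennreal ((C1 * \<bar>h\<bar> powr \<alpha>) powr p)"
    and w: "4 / \<epsilon> \<le> w"
  shows "(\<integral>\<^sup>+u. ennreal (\<bar>f (u + y / w) - f u\<bar> powr p) \<partial>lborel)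
    \<le> ennreal ((C1 * w powr (- \<alpha>)) powr p * (1 + \<bar>y\<bar> powr p))"
proof -
  define X where "X = C1 * w powr (- \<alpha>)"
  have w_pos: "0 < w"
    using w \<epsilon> divide_pos_pos[of 4 \<epsilon>] by linarith
  have X: "0 < X"
    using C1 w_pos by (simp add: X_def)
  consider "\<bar>y / w\<bar> < \<epsilon>" | "\<epsilon> \<le> \<bar>y / w\<bar>"
    by linarith
  then show ?thesis
  proof cases
    case 1
    have "C1 * \<bar>y / w\<bar> powr \<alpha> = X * \<bar>y\<bar> powr \<alpha>"
      using w_pos by (simp add: X_def abs_divide powr_divide powr_minus_divide)
    then have "(C1 * \<bar>y / w\<bar> powr \<alpha>) powr p = X powr p * \<bar>y\<bar> powr (\<alpha> * p)"
      using X by (simp add: powr_mult powr_powr)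
    also have "\<dots> \<le> X powr p * (1 + \<bar>y\<bar> powr p)"
      using \<alpha> p by (intro mult_left_mono powr_le_one_plus_powr) auto
    finally show ?thesis
      unfolding X_def using small[OF 1] by (meson ennreal_leI order.trans)
  next
    case 2
    have "C1 * ((4 / \<epsilon>) powr (1 - \<alpha>) * \<bar>y / w\<bar>) \<le> C1 * (w powr (- \<alpha>) * \<bar>y\<bar>)"
      using large_shift_factor_le[OF \<epsilon> w \<alpha>(2)] C1 by (intro mult_left_mono) auto
    then have "(C1 * (4 / \<epsilon>) powr (1 - \<alpha>) * \<bar>y / w\<bar>) powr p \<le> (X * \<bar>y\<bar>) powr p"
      using p C1 by (intro powr_mono2) (auto simp: X_def mult_ac)
    also have "\<dots> \<le> X powr p * (1 + \<bar>y\<bar> powr p)"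
      using X by (simp add: powr_mult)
    finally show ?thesis
      unfolding X_def using Lip_with_large_shift_le[OF \<epsilon> small 2] by (meson ennreal_leI order.trans)
  qed
qed

lemma Lip_with_scaled_shift_le:
  "\<forall>\<^sub>F w in at_top. \<forall>y. (\<integral>\<^sup>+u. ennreal (\<bar>f (u + y / w) - f u\<bar> powr p) \<partial>lborel)
      \<le> ennreal ((C1 * w powr (- \<alpha>)) powr p * (1 + \<bar>y\<bar> powr p))"
proof -
  obtain \<epsilon> where \<epsilon>: "\<epsilon> > 0" and small: "\<And>h. \<bar>h\<bar> < \<epsilon> \<Longrightarrow>
    (\<integral>\<^sup>+u. ennreal (\<bar>f (u + h) - f u\<bar> powr p) \<partial>lborel) \<le> ennreal ((C1 * \<bar>h\<bar> powr \<alpha>) powr p)"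
    using Lip_with_small_shift_le by blast
  show ?thesis
    using eventually_ge_at_top[of "4 / \<epsilon>"]
    by eventually_elim (use Lip_with_scaled_shift_bound[OF \<epsilon> small] in blast)
qed

lemma Lip_with_eventually_small_shift_le:
  "\<forall>\<^sub>F w in at_top. \<forall>s. 0 \<le> s \<longrightarrow> s \<le> \<Delta> / w \<longrightarrow>
     (\<integral>\<^sup>+u. ennreal (\<bar>f (u + s) - f u\<bar> powr p) \<partial>lborel) \<le> ennreal ((C1 * (\<Delta> / w) powr \<alpha>) powr p)"
proof -
  obtain \<epsilon> where \<epsilon>: "\<epsilon> > 0" and small: "\<And>h. \<bar>h\<bar> < \<epsilon> \<Longrightarrow>
    (\<integral>\<^sup>+u. ennreal (\<bar>f (u + h) - f u\<bar> powr p) \<partial>lborel) \<le> ennreal ((C1 * \<bar>h\<bar> powr \<alpha>) powr p)"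
    using Lip_with_small_shift_le by blast
  have bound: "(\<integral>\<^sup>+u. ennreal (\<bar>f (u + s) - f u\<bar> powr p) \<partial>lborel) \<le> ennreal ((C1 * (\<Delta> / w) powr \<alpha>) powr p)"
    if w: "0 < w" "\<bar>\<Delta>\<bar> / \<epsilon> < w" and s: "0 \<le> s" "s \<le> \<Delta> / w" for w s
  proof -
    have "\<bar>\<Delta>\<bar> < \<epsilon> * w"
      using w \<epsilon> by (simp add: field_simps)
    then have "\<Delta> / w < \<epsilon>"
      using w by (simp add: divide_less_eq)
    then have "s < \<epsilon>"
      using s by linarith
    then have "(\<integral>\<^sup>+u. ennreal (\<bar>f (u + s) - f u\<bar> powr p) \<partial>lborel) \<le> ennreal ((C1 * s powr \<alpha>) powr p)"
      using small[of s] s by simp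
    also have "\<dots> \<le> ennreal ((C1 * (\<Delta> / w) powr \<alpha>) powr p)"
      using s C1 \<alpha> p by (intro ennreal_leI powr_mono2 mult_left_mono) auto
    finally show ?thesis .
  qed
  show ?thesis
    using eventually_gt_at_top[of 0] eventually_gt_at_top[of "\<bar>\<Delta>\<bar> / \<epsilon>"]
    by eventually_elim (use bound in blast)
qed

end

section \<open>The pointwise estimate\<close>

(* The error terms J1, J2 of the paper are the instances G k u = |f u - f (u + (x - t k / w))|
   and G k u = |f (u + (x - t k / w)) - f x|. *)
definition local_means_sum ::
  "(int \<Rightarrow> real) \<Rightarrow> (real \<Rightarrow> real) \<Rightarrow> real \<Rightarrow> (int \<Rightarrow> real \<Rightarrow> ennreal) \<Rightarrow> real \<Rightarrow> ennreal" where
  "local_means_sum t L w G x =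
     (\<integral>\<^sup>+k. ennreal (L (w * x - t k)) * (ennreal (w / (t (k + 1) - t k))
        * (\<integral>\<^sup>+u. indicator {t k / w .. t (k + 1) / w} u * G k u \<partial>lborel)) \<partial>count_space UNIV)"

lemma borel_measurable_local_means_sum:
  assumes [measurable]: "L \<in> borel_measurable borel"
    and G: "\<And>k. (\<lambda>(x, u). G x k u) \<in> borel_measurable (borel \<Otimes>\<^sub>M borel)"
  shows "(\<lambda>x. local_means_sum t L w (G x) x) \<in> borel_measurable borel"
  unfolding local_means_sum_def
proof (intro borel_measurable_nn_integral_count_space)
  fix k
  have [measurable]: "(\<lambda>(x, u). G x k u) \<in> borel_measurable (borel \<Otimes>\<^sub>M borel)"
    by (rule G)
  show "(\<lambda>x. ennreal (L (w * x - t k)) * (ennreal (w / (t (k + 1) - t k))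
      * (\<integral>\<^sup>+u. indicator {t k / w .. t (k + 1) / w} u * G x k u \<partial>lborel))) \<in> borel_measurable borel"
    by measurable
qed

lemma local_means_sum_add:
  assumes "\<And>k. G k \<in> borel_measurable borel" "\<And>k. H k \<in> borel_measurable borel"
  shows "local_means_sum t L w (\<lambda>k u. G k u + H k u) x = local_means_sum t L w G x + local_means_sum t L w H x"
proof -
  have "(\<integral>\<^sup>+u. indicator {t k / w .. t (k + 1) / w} u * (G k u + H k u) \<partial>lborel)
      = (\<integral>\<^sup>+u. indicator {t k / w .. t (k + 1) / w} u * G k u \<partial>lborel)
        + (\<integral>\<^sup>+u. indicator {t k / w .. t (k + 1) / w} u * H k u \<partial>lborel)" for k
    using assms by (simp add: distrib_left nn_integral_add)
  then show ?thesis
    unfolding local_means_sum_def by (simp add: distrib_left nn_integral_add)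
qed

lemma local_means_sum_mono:
  "(\<And>k u. G k u \<le> H k u) \<Longrightarrow> local_means_sum t L w G x \<le> local_means_sum t L w H x"
  unfolding local_means_sum_def by (intro nn_integral_mono mult_left_mono) (auto simp: indicator_def)

lemma sampling_interval_average_dist_le:
  assumes w: "0 < w" and k: "t k < t (k + 1)" and f: "set_integrable lborel {t k / w .. t (k + 1) / w} f"
  shows "ennreal \<bar>(w / (t (k + 1) - t k)) * (LINT u:{t k / w .. t (k + 1) / w}|lborel. f u) - y\<bar>
    \<le> ennreal (w / (t (k + 1) - t k)) * (\<integral>\<^sup>+u. indicator {t k / w .. t (k + 1) / w} u * ennreal \<bar>f u - y\<bar> \<partial>lborel)"
proof -
  have "w / (t (k + 1) - t k) = 1 / (t (k + 1) / w - t k / w)"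
    using w by (simp add: diff_divide_distrib[symmetric])
  moreover have "t k / w < t (k + 1) / w"
    using w k by (simp add: divide_strict_right_mono)
  ultimately show ?thesis
    using interval_average_dist_le[OF _ f] by simp
qed

lemma kernel_sum_dist_le:
  assumes chi2: "\<And>x. K x 0 = 0" and T: "T_w K t w x \<le> ennreal \<tau>" and \<tau>: "0 \<le> \<tau>"
  shows "\<bar>(\<Sum>\<^sub>\<infinity>k. K (w * x - t k) v) - v\<bar> \<le> \<tau> * \<bar>v\<bar>"
proof (cases "v = 0")
  case False
  have "ennreal \<bar>(1 / v) * (\<Sum>\<^sub>\<infinity>k. K (w * x - t k) v) - 1\<bar> \<le> T_w K t w x"
    unfolding T_w_def by (rule SUP_upper) (use False in simp)
  then have "ennreal \<bar>(1 / v) * (\<Sum>\<^sub>\<infinity>k. K (w * x - t k) v) - 1\<bar> \<le> ennreal \<tau>"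
    using T by (rule order.trans)
  then have "\<bar>(1 / v) * (\<Sum>\<^sub>\<infinity>k. K (w * x - t k) v) - 1\<bar> \<le> \<tau>"
    using \<tau> by (simp add: ennreal_le_iff)
  then have "\<bar>v\<bar> * \<bar>(1 / v) * (\<Sum>\<^sub>\<infinity>k. K (w * x - t k) v) - 1\<bar> \<le> \<bar>v\<bar> * \<tau>"
    by (rule mult_left_mono) simp
  moreover have "\<bar>v\<bar> * \<bar>(1 / v) * (\<Sum>\<^sub>\<infinity>k. K (w * x - t k) v) - 1\<bar> = \<bar>(\<Sum>\<^sub>\<infinity>k. K (w * x - t k) v) - v\<bar>"
    using False by (simp add: field_simps flip: abs_mult)
  ultimately show ?thesis
    by (simp add: mult.commute)
qed (simp add: chi2)

lemma kernel_sum_perturb_le: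
  fixes y a :: "int \<Rightarrow> real"
  assumes chi1: "(\<lambda>k. \<bar>K (y k) v\<bar>) summable_on UNIV"
    and chi3: "\<And>x u v. \<bar>K x u - K x v\<bar> \<le> L x * \<bar>u - v\<bar>"
    and h: "(\<lambda>k. L (y k) * \<bar>a k - v\<bar>) summable_on UNIV"
  shows "\<bar>(\<Sum>\<^sub>\<infinity>k. K (y k) (a k)) - v\<bar> \<le> (\<Sum>\<^sub>\<infinity>k. L (y k) * \<bar>a k - v\<bar>) + \<bar>(\<Sum>\<^sub>\<infinity>k. K (y k) v) - v\<bar>"
proof -
  define d where "d k = K (y k) (a k) - K (y k) v" for k
  have d_le: "norm (d k) \<le> L (y k) * \<bar>a k - v\<bar>" for k
    using chi3 by (simp add: d_def)
  have d_abs: "(\<lambda>k. norm (d k)) summable_on UNIV"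
    by (rule Infinite_Sum.abs_summable_on_comparison_test'[OF h d_le])
  have "(\<lambda>k. norm (K (y k) v)) summable_on UNIV"
    using chi1 by simp
  then have "(\<lambda>k. K (y k) v) summable_on UNIV"
    by (rule abs_summable_summable)
  then have "(\<Sum>\<^sub>\<infinity>k. d k + K (y k) v) = (\<Sum>\<^sub>\<infinity>k. d k) + (\<Sum>\<^sub>\<infinity>k. K (y k) v)"
    using abs_summable_summable[OF d_abs] by (intro infsum_add)
  then have eq: "(\<Sum>\<^sub>\<infinity>k. K (y k) (a k)) - v = (\<Sum>\<^sub>\<infinity>k. d k) + ((\<Sum>\<^sub>\<infinity>k. K (y k) v) - v)"
    by (simp add: d_def)
  have "\<bar>\<Sum>\<^sub>\<infinity>k. d k\<bar> \<le> (\<Sum>\<^sub>\<infinity>k. norm (d k))"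
    using norm_infsum_bound[OF d_abs] by simp
  also have "\<dots> \<le> (\<Sum>\<^sub>\<infinity>k. L (y k) * \<bar>a k - v\<bar>)"
    by (rule infsum_mono[OF d_abs h d_le])
  finally show ?thesis
    unfolding eq using abs_triangle_ineq[of "\<Sum>\<^sub>\<infinity>k. d k" "(\<Sum>\<^sub>\<infinity>k. K (y k) v) - v"] by linarith
qed

lemma S_w_pointwise_le:
  assumes p: "1 \<le> p" and f: "in_Lp p f" and w: "0 < w" and samp: "sampling_seq t \<delta> \<Delta>"
    and chi1: "\<And>u. (\<lambda>k. \<bar>K (w * x - t k) u\<bar>) summable_on UNIV"
    and chi3: "\<And>x u v. \<bar>K x u - K x v\<bar> \<le> L x * \<bar>u - v\<bar>" and L_nonneg: "\<And>x. 0 \<le> L x"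
    and defect: "\<bar>(\<Sum>\<^sub>\<infinity>k. K (w * x - t k) (f x)) - f x\<bar> \<le> e"
  shows "ennreal \<bar>S_w K t w f x - f x\<bar> \<le> local_means_sum t L w (\<lambda>k u. ennreal \<bar>f u - f x\<bar>) x + ennreal e"
proof -
  define a where "a k = (w / (t (k + 1) - t k)) * (LINT u:{t k / w .. t (k + 1) / w}|lborel. f u)" for k
  define h where "h k = L (w * x - t k) * \<bar>a k - f x\<bar>" for k
  have h_nonneg: "0 \<le> h k" for k
    using L_nonneg by (simp add: h_def)
  have "ennreal \<bar>a k - f x\<bar> \<le> ennreal (w / (t (k + 1) - t k))
      * (\<integral>\<^sup>+u. indicator {t k / w .. t (k + 1) / w} u * ennreal \<bar>f u - f x\<bar> \<partial>lborel)" for k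
    unfolding a_def using strict_monoD[OF sampling_seqD(3)[OF samp], of k "k + 1"]
    by (intro sampling_interval_average_dist_le[OF w] in_Lp_set_integrable_Icc[OF p f]) simp
  then have "ennreal (h k) \<le> ennreal (L (w * x - t k)) * (ennreal (w / (t (k + 1) - t k))
      * (\<integral>\<^sup>+u. indicator {t k / w .. t (k + 1) / w} u * ennreal \<bar>f u - f x\<bar> \<partial>lborel))" for k
    unfolding h_def using L_nonneg by (simp add: ennreal_mult mult_left_mono)
  then have h_le: "(\<integral>\<^sup>+k. ennreal (h k) \<partial>count_space UNIV) \<le> local_means_sum t L w (\<lambda>k u. ennreal \<bar>f u - f x\<bar>) x"
    unfolding local_means_sum_def by (intro nn_integral_mono)
  show ?thesis
  proof (cases "(\<integral>\<^sup>+k. ennreal (h k) \<partial>count_space UNIV) = \<infinity>")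
    case True
    then show ?thesis
      using h_le by (simp add: top_unique)
  next
    case False
    then have h_sum: "h summable_on UNIV"
      by (intro summable_on_if_nn_integral_count_space_finite h_nonneg) (simp add: less_top)
    have "\<bar>S_w K t w f x - f x\<bar> \<le> (\<Sum>\<^sub>\<infinity>k. h k) + e"
      using kernel_sum_perturb_le[where y="\<lambda>k. w * x - t k" and v="f x", OF chi1 chi3 h_sum[unfolded h_def]] defect
      unfolding S_w_def h_def a_def by linarith
    then have "ennreal \<bar>S_w K t w f x - f x\<bar> \<le> ennreal (\<Sum>\<^sub>\<infinity>k. h k) + ennreal e"
      using defect h_nonneg by (simp add: ennreal_plus[symmetric] ennreal_leI infsum_nonneg del: ennreal_plus)
    also have "\<dots> \<le> local_means_sum t L w (\<lambda>k u. ennreal \<bar>f u - f x\<bar>) x + ennreal e"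
      using h_le unfolding nn_integral_count_space_eq_infsum[OF h_nonneg h_sum] by (rule add_right_mono)
    finally show ?thesis .
  qed
qed

section \<open>Integral estimates\<close>

lemma sampling_interval_mean_powr_le:
  fixes G :: "real \<Rightarrow> ennreal"
  assumes p: "1 \<le> p" and samp: "sampling_seq t \<delta> \<Delta>" and w: "0 < w" and G: "G \<in> borel_measurable borel"
  shows "enn_powr (ennreal (w / (t (k + 1) - t k)) * (\<integral>\<^sup>+u. indicator {t k / w .. t (k + 1) / w} u * G u \<partial>lborel)) p
    \<le> ennreal (w / \<delta>) * (\<integral>\<^sup>+u. indicator {t k / w .. t (k + 1) / w} u * enn_powr (G u) p \<partial>lborel)"
proof -
  have gap: "\<delta> \<le> t (k + 1) - t k" and \<delta>: "0 < \<delta>"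
    using sampling_seqD[OF samp] by auto
  have "w / (t (k + 1) - t k) = 1 / (t (k + 1) / w - t k / w)"
    using w by (simp add: diff_divide_distrib[symmetric])
  moreover have "t k / w < t (k + 1) / w"
    using w gap \<delta> by (simp add: divide_strict_right_mono)
  ultimately have "enn_powr (ennreal (w / (t (k + 1) - t k))
        * (\<integral>\<^sup>+u. indicator {t k / w .. t (k + 1) / w} u * G u \<partial>lborel)) p
      \<le> ennreal (w / (t (k + 1) - t k)) * (\<integral>\<^sup>+u. indicator {t k / w .. t (k + 1) / w} u * enn_powr (G u) p \<partial>lborel)"
    using interval_mean_powr_le[OF p _ G] by simp
  also have "\<dots> \<le> ennreal (w / \<delta>) * (\<integral>\<^sup>+u. indicator {t k / w .. t (k + 1) / w} u * enn_powr (G u) p \<partial>lborel)"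
    using w gap \<delta> by (intro mult_right_mono ennreal_leI divide_left_mono) auto
  finally show ?thesis .
qed

lemma local_means_sum_powr_le:
  assumes p: "1 \<le> p" and samp: "sampling_seq t \<delta> \<Delta>" and w: "0 < w"
    and L_nonneg: "\<And>x. 0 \<le> L x" and m: "0 \<le> m"
    and L_sum: "\<And>u. (\<integral>\<^sup>+k. ennreal (L (u - t k)) \<partial>count_space UNIV) \<le> ennreal m"
    and G: "\<And>k. G k \<in> borel_measurable borel"
  shows "enn_powr (local_means_sum t L w G x) p
    \<le> ennreal (m powr (p - 1) * (w / \<delta>)) * (\<integral>\<^sup>+k. ennreal (L (w * x - t k))
        * (\<integral>\<^sup>+u. indicator {t k / w .. t (k + 1) / w} u * enn_powr (G k u) p \<partial>lborel) \<partial>count_space UNIV)"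
proof -
  have "enn_powr (local_means_sum t L w G x) p \<le> ennreal (m powr (p - 1)) * (\<integral>\<^sup>+k. ennreal (L (w * x - t k))
      * enn_powr (ennreal (w / (t (k + 1) - t k)) * (\<integral>\<^sup>+u. indicator {t k / w .. t (k + 1) / w} u * G k u \<partial>lborel)) p
      \<partial>count_space UNIV)"
    unfolding local_means_sum_def using m L_sum by (intro Jensen_nn_integral_powr[OF p]) auto
  also have "\<dots> \<le> ennreal (m powr (p - 1)) * (\<integral>\<^sup>+k. ennreal (w / \<delta>) * (ennreal (L (w * x - t k))
      * (\<integral>\<^sup>+u. indicator {t k / w .. t (k + 1) / w} u * enn_powr (G k u) p \<partial>lborel)) \<partial>count_space UNIV)"
  proof (intro mult_left_mono nn_integral_mono)
    fix k
    show "ennreal (L (w * x - t k)) * enn_powr (ennreal (w / (t (k + 1) - t k))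
        * (\<integral>\<^sup>+u. indicator {t k / w .. t (k + 1) / w} u * G k u \<partial>lborel)) p
      \<le> ennreal (w / \<delta>) * (ennreal (L (w * x - t k))
        * (\<integral>\<^sup>+u. indicator {t k / w .. t (k + 1) / w} u * enn_powr (G k u) p \<partial>lborel))"
      using mult_left_mono[OF sampling_interval_mean_powr_le[OF p samp w G[of k]], of "ennreal (L (w * x - t k))"]
      by (simp add: mult.left_commute)
  qed simp
  also have "\<dots> = ennreal (m powr (p - 1) * (w / \<delta>)) * (\<integral>\<^sup>+k. ennreal (L (w * x - t k))
      * (\<integral>\<^sup>+u. indicator {t k / w .. t (k + 1) / w} u * enn_powr (G k u) p \<partial>lborel) \<partial>count_space UNIV)"
  proof -
    have "ennreal (m powr (p - 1) * (w / \<delta>)) = ennreal (m powr (p - 1)) * ennreal (w / \<delta>)"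
      using w sampling_seqD(1)[OF samp] by (intro ennreal_mult) auto
    then show ?thesis
      by (simp add: nn_integral_cmult mult.assoc)
  qed
  finally show ?thesis .
qed

lemma nn_integral_dilate_swap:
  fixes H :: "real \<Rightarrow> real \<Rightarrow> ennreal"
  assumes w: "0 < w"
    and [measurable]: "L \<in> borel_measurable borel" "(\<lambda>(u, h). H u h) \<in> borel_measurable (borel \<Otimes>\<^sub>M borel)"
  shows "ennreal w * (\<integral>\<^sup>+x. ennreal (L (w * x - c)) * (\<integral>\<^sup>+u. indicator {a..b} u * H u (x - c / w) \<partial>lborel) \<partial>lborel)
    = (\<integral>\<^sup>+u. indicator {a..b} u * (\<integral>\<^sup>+y. ennreal (L y) * H u (y / w) \<partial>lborel) \<partial>lborel)"
proof -
  have dilate: "ennreal w * (\<integral>\<^sup>+x. ennreal (L (w * x - c)) * H u (x - c / w) \<partial>lborel)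
      = (\<integral>\<^sup>+y. ennreal (L y) * H u (y / w) \<partial>lborel)" for u
  proof -
    have "(\<lambda>x. ennreal (L (w * x - c)) * H u (x - c / w)) = (\<lambda>x. ennreal (L (w * x - c)) * H u ((w * x - c) / w))"
      using w by (simp add: diff_divide_distrib)
    then show ?thesis
      using w by (simp add: nn_integral_lborel_dilate[of "\<lambda>y. ennreal (L y) * H u (y / w)"])
  qed
  have "(\<integral>\<^sup>+x. ennreal (L (w * x - c)) * (\<integral>\<^sup>+u. indicator {a..b} u * H u (x - c / w) \<partial>lborel) \<partial>lborel)
      = (\<integral>\<^sup>+x. \<integral>\<^sup>+u. indicator {a..b} u * (ennreal (L (w * x - c)) * H u (x - c / w)) \<partial>lborel \<partial>lborel)"
    by (intro nn_integral_cong) (simp add: nn_integral_cmult[symmetric] mult.left_commute)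
  also have "\<dots> = (\<integral>\<^sup>+u. \<integral>\<^sup>+x. indicator {a..b} u * (ennreal (L (w * x - c)) * H u (x - c / w)) \<partial>lborel \<partial>lborel)"
    by (rule lborel_pair.Fubini') measurable
  also have "\<dots> = (\<integral>\<^sup>+u. indicator {a..b} u * (\<integral>\<^sup>+x. ennreal (L (w * x - c)) * H u (x - c / w) \<partial>lborel) \<partial>lborel)"
    by (intro nn_integral_cong) (simp add: nn_integral_cmult)
  finally have "ennreal w * (\<integral>\<^sup>+x. ennreal (L (w * x - c))
        * (\<integral>\<^sup>+u. indicator {a..b} u * H u (x - c / w) \<partial>lborel) \<partial>lborel)
      = ennreal w * (\<integral>\<^sup>+u. indicator {a..b} u * (\<integral>\<^sup>+x. ennreal (L (w * x - c)) * H u (x - c / w) \<partial>lborel) \<partial>lborel)"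
    by simp
  also have "\<dots> = (\<integral>\<^sup>+u. indicator {a..b} u
      * (ennreal w * (\<integral>\<^sup>+x. ennreal (L (w * x - c)) * H u (x - c / w) \<partial>lborel)) \<partial>lborel)"
    by (simp add: mult.left_commute[of _ "ennreal w"] nn_integral_cmult)
  finally show ?thesis
    by (simp only: dilate)
qed

(* After the substitution y = w x - t k every node contributes the same integral over its sampling
   interval, and these intervals only overlap in the null set of their endpoints. *)
lemma sampling_translates_integral_le:
  fixes H :: "real \<Rightarrow> real \<Rightarrow> ennreal"
  assumes samp: "sampling_seq t \<delta> \<Delta>" and w: "0 < w"
    and [measurable]: "L \<in> borel_measurable borel" "(\<lambda>(u, h). H u h) \<in> borel_measurable (borel \<Otimes>\<^sub>M borel)"
  shows "ennreal w * (\<integral>\<^sup>+x. \<integral>\<^sup>+k. ennreal (L (w * x - t k))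
      * (\<integral>\<^sup>+u. indicator {t k / w .. t (k + 1) / w} u * H u (x - t k / w) \<partial>lborel) \<partial>count_space UNIV \<partial>lborel)
    \<le> (\<integral>\<^sup>+u. \<integral>\<^sup>+y. ennreal (L y) * H u (y / w) \<partial>lborel \<partial>lborel)"
proof -
  define \<Phi> where "\<Phi> u = (\<integral>\<^sup>+y. ennreal (L y) * H u (y / w) \<partial>lborel)" for u
  have [measurable]: "\<Phi> \<in> borel_measurable borel"
    unfolding \<Phi>_def by measurable
  have "ennreal w * (\<integral>\<^sup>+x. \<integral>\<^sup>+k. ennreal (L (w * x - t k))
      * (\<integral>\<^sup>+u. indicator {t k / w .. t (k + 1) / w} u * H u (x - t k / w) \<partial>lborel) \<partial>count_space UNIV \<partial>lborel)
    = ennreal w * (\<integral>\<^sup>+k. \<integral>\<^sup>+x. ennreal (L (w * x - t k))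
      * (\<integral>\<^sup>+u. indicator {t k / w .. t (k + 1) / w} u * H u (x - t k / w) \<partial>lborel) \<partial>lborel \<partial>count_space UNIV)"
    by (subst nn_integral_count_space_nn_integral) auto
  also have "\<dots> = (\<integral>\<^sup>+k. \<integral>\<^sup>+u. indicator {t k / w .. t (k + 1) / w} u * \<Phi> u \<partial>lborel \<partial>count_space UNIV)"
    unfolding \<Phi>_def
    by (simp add: nn_integral_cmult[where M="count_space UNIV", symmetric] nn_integral_dilate_swap[OF w])
  also have "\<dots> = (\<integral>\<^sup>+u. (\<integral>\<^sup>+k. indicator {t k / w .. t (k + 1) / w} u \<partial>count_space UNIV) * \<Phi> u \<partial>lborel)"
    by (simp add: nn_integral_multc flip: nn_integral_count_space_nn_integral)
  also have "\<dots> \<le> (\<integral>\<^sup>+u. \<Phi> u \<partial>lborel)"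
  proof (rule nn_integral_mono_AE)
    have "AE u in lborel. u \<notin> range (\<lambda>k. t k / w)"
      by (intro AE_not_in countable_imp_null_set_lborel) auto
    then show "AE u in lborel. (\<integral>\<^sup>+k. indicator {t k / w .. t (k + 1) / w} u \<partial>count_space UNIV) * \<Phi> u \<le> \<Phi> u"
    proof eventually_elim
      case (elim u)
      show ?case
        using mult_right_mono[OF sampling_intervals_cover_once[OF samp w elim], of "\<Phi> u"] by simp
    qed
  qed
  finally show ?thesis
    unfolding \<Phi>_def .
qed

lemma local_means_sum_translation_integral_le:
  assumes p: "1 \<le> p" and samp: "sampling_seq t \<delta> \<Delta>" and w: "0 < w"
    and L_nonneg: "\<And>x. 0 \<le> L x" and [measurable]: "L \<in> borel_measurable borel" and m: "0 \<le> m"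
    and L_sum: "\<And>u. (\<integral>\<^sup>+k. ennreal (L (u - t k)) \<partial>count_space UNIV) \<le> ennreal m"
    and [measurable]: "f \<in> borel_measurable borel"
  shows "(\<integral>\<^sup>+x. enn_powr (local_means_sum t L w (\<lambda>k u. ennreal \<bar>f u - f (u + (x - t k / w))\<bar>) x) p \<partial>lborel)
    \<le> ennreal (m powr (p - 1) / \<delta>)
      * (\<integral>\<^sup>+y. ennreal (L y) * (\<integral>\<^sup>+u. ennreal (\<bar>f (u + y / w) - f u\<bar> powr p) \<partial>lborel) \<partial>lborel)"
proof -
  define H where "H u h = ennreal (\<bar>f u - f (u + h)\<bar> powr p)" for u h
  have [measurable]: "(\<lambda>(u, h). H u h) \<in> borel_measurable (borel \<Otimes>\<^sub>M borel)"
    unfolding H_def by measurable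
  define R where "R x = (\<integral>\<^sup>+k. ennreal (L (w * x - t k))
      * (\<integral>\<^sup>+u. indicator {t k / w .. t (k + 1) / w} u * H u (x - t k / w) \<partial>lborel) \<partial>count_space UNIV)" for x
  have [measurable]: "R \<in> borel_measurable borel"
    unfolding R_def by (intro borel_measurable_nn_integral_count_space) measurable
  have "ennreal (m powr (p - 1) * (w / \<delta>)) = ennreal (m powr (p - 1) / \<delta>) * ennreal w"
    using w sampling_seqD(1)[OF samp] by (simp add: ennreal_mult[symmetric])
  then have "enn_powr (local_means_sum t L w (\<lambda>k u. ennreal \<bar>f u - f (u + (x - t k / w))\<bar>) x) p
      \<le> ennreal (m powr (p - 1) / \<delta>) * (ennreal w * R x)" for x
    using local_means_sum_powr_le[OF p samp w L_nonneg m L_sum, of "\<lambda>k u. ennreal \<bar>f u - f (u + (x - t k / w))\<bar>" x]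
    by (simp add: R_def H_def mult.assoc)
  then have "(\<integral>\<^sup>+x. enn_powr (local_means_sum t L w (\<lambda>k u. ennreal \<bar>f u - f (u + (x - t k / w))\<bar>) x) p \<partial>lborel)
      \<le> (\<integral>\<^sup>+x. ennreal (m powr (p - 1) / \<delta>) * (ennreal w * R x) \<partial>lborel)"
    by (rule nn_integral_mono)
  also have "\<dots> = ennreal (m powr (p - 1) / \<delta>) * (ennreal w * (\<integral>\<^sup>+x. R x \<partial>lborel))"
    by (simp add: nn_integral_cmult)
  also have "\<dots> \<le> ennreal (m powr (p - 1) / \<delta>) * (\<integral>\<^sup>+u. \<integral>\<^sup>+y. ennreal (L y) * H u (y / w) \<partial>lborel \<partial>lborel)"
    unfolding R_def by (intro mult_left_mono sampling_translates_integral_le[OF samp w]) auto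
  also have "(\<integral>\<^sup>+u. \<integral>\<^sup>+y. ennreal (L y) * H u (y / w) \<partial>lborel \<partial>lborel)
      = (\<integral>\<^sup>+y. ennreal (L y) * (\<integral>\<^sup>+u. ennreal (\<bar>f (u + y / w) - f u\<bar> powr p) \<partial>lborel) \<partial>lborel)"
    by (subst lborel_pair.Fubini') (auto simp: H_def abs_minus_commute nn_integral_cmult)
  finally show ?thesis .
qed

lemma kernel_weighted_shift_integral_le:
  assumes L_nonneg: "\<And>x. 0 \<le> L x" and L_int: "integrable lborel L"
    and Mp: "integrable lborel (\<lambda>u. L u * \<bar>u\<bar> powr p)" and c: "0 \<le> c"
    and shift: "\<And>y. (\<integral>\<^sup>+u. ennreal (\<bar>f (u + y / w) - f u\<bar> powr p) \<partial>lborel) \<le> ennreal (c powr p * (1 + \<bar>y\<bar> powr p))"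
  shows "(\<integral>\<^sup>+y. ennreal (L y) * (\<integral>\<^sup>+u. ennreal (\<bar>f (u + y / w) - f u\<bar> powr p) \<partial>lborel) \<partial>lborel)
    \<le> ennreal (c powr p * ((LINT u|lborel. L u) + (LINT u|lborel. L u * \<bar>u\<bar> powr p)))"
proof -
  have "(\<integral>\<^sup>+y. ennreal (L y) * (\<integral>\<^sup>+u. ennreal (\<bar>f (u + y / w) - f u\<bar> powr p) \<partial>lborel) \<partial>lborel)
      \<le> (\<integral>\<^sup>+y. ennreal (c powr p) * (ennreal (L y) + ennreal (L y * \<bar>y\<bar> powr p)) \<partial>lborel)"
    using L_nonneg
    by (intro nn_integral_mono order.trans[OF mult_left_mono[OF shift]])
      (simp_all add: ennreal_mult[symmetric] ennreal_plus[symmetric] algebra_simps del: ennreal_plus)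
  also have "\<dots> = ennreal (c powr p) * ((\<integral>\<^sup>+y. ennreal (L y) \<partial>lborel) + (\<integral>\<^sup>+y. ennreal (L y * \<bar>y\<bar> powr p) \<partial>lborel))"
    using L_int Mp by (simp add: nn_integral_cmult nn_integral_add)
  also have "(\<integral>\<^sup>+y. ennreal (L y) \<partial>lborel) = ennreal (LINT u|lborel. L u)"
    using L_int L_nonneg by (intro nn_integral_eq_integral) auto
  also have "(\<integral>\<^sup>+y. ennreal (L y * \<bar>y\<bar> powr p) \<partial>lborel) = ennreal (LINT u|lborel. L u * \<bar>u\<bar> powr p)"
    using Mp L_nonneg by (intro nn_integral_eq_integral) auto
  also have "ennreal (c powr p) * (ennreal (LINT u|lborel. L u) + ennreal (LINT u|lborel. L u * \<bar>u\<bar> powr p))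
      = ennreal (c powr p * ((LINT u|lborel. L u) + (LINT u|lborel. L u * \<bar>u\<bar> powr p)))"
    using L_nonneg by (simp add: integral_nonneg_AE ennreal_mult ennreal_plus)
  finally show ?thesis .
qed

lemma local_means_sum_translation_Lp_le:
  assumes p: "1 \<le> p" and samp: "sampling_seq t \<delta> \<Delta>" and w: "0 < w"
    and L_nonneg: "\<And>x. 0 \<le> L x" and [measurable]: "L \<in> borel_measurable borel" and m: "0 \<le> m"
    and L_sum: "\<And>u. (\<integral>\<^sup>+k. ennreal (L (u - t k)) \<partial>count_space UNIV) \<le> ennreal m"
    and L_int: "integrable lborel L" and Mp: "integrable lborel (\<lambda>u. L u * \<bar>u\<bar> powr p)"
    and [measurable]: "f \<in> borel_measurable borel" and c: "0 \<le> c"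
    and shift: "\<And>y. (\<integral>\<^sup>+u. ennreal (\<bar>f (u + y / w) - f u\<bar> powr p) \<partial>lborel) \<le> ennreal (c powr p * (1 + \<bar>y\<bar> powr p))"
  shows "(\<integral>\<^sup>+x. enn_powr (local_means_sum t L w (\<lambda>k u. ennreal \<bar>f u - f (u + (x - t k / w))\<bar>) x) p \<partial>lborel)
    \<le> ennreal ((\<delta> powr (- 1 / p) * m powr ((p - 1) / p)
         * ((LINT u|lborel. L u) + (LINT u|lborel. L u * \<bar>u\<bar> powr p)) powr (1 / p) * c) powr p)"
proof -
  define Q where "Q = (LINT u|lborel. L u) + (LINT u|lborel. L u * \<bar>u\<bar> powr p)"
  have Q: "0 \<le> Q"
    using L_nonneg by (simp add: Q_def integral_nonneg_AE)
  have \<delta>: "0 < \<delta>"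
    using sampling_seqD(1)[OF samp] .
  have "(\<integral>\<^sup>+x. enn_powr (local_means_sum t L w (\<lambda>k u. ennreal \<bar>f u - f (u + (x - t k / w))\<bar>) x) p \<partial>lborel)
      \<le> ennreal (m powr (p - 1) / \<delta>)
        * (\<integral>\<^sup>+y. ennreal (L y) * (\<integral>\<^sup>+u. ennreal (\<bar>f (u + y / w) - f u\<bar> powr p) \<partial>lborel) \<partial>lborel)"
    by (rule local_means_sum_translation_integral_le[OF p samp w L_nonneg _ m L_sum]) measurable
  also have "\<dots> \<le> ennreal (m powr (p - 1) / \<delta>) * ennreal (c powr p * Q)"
    unfolding Q_def using kernel_weighted_shift_integral_le[OF L_nonneg L_int Mp c shift]
    by (rule mult_left_mono) simp
  also have "\<dots> = ennreal ((\<delta> powr (- 1 / p) * m powr ((p - 1) / p) * Q powr (1 / p) * c) powr p)"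
    using p \<delta> m Q c
    by (simp add: ennreal_mult[symmetric] powr_mult powr_divide powr_divide_exponent_powr powr_inverse_root_powr)
  finally show ?thesis
    unfolding Q_def .
qed

lemma sampling_window_shift_integral_le:
  assumes samp: "sampling_seq t \<delta> \<Delta>" and w: "0 < w" and [measurable]: "f \<in> borel_measurable borel"
  shows "(\<integral>\<^sup>+u. indicator {t k / w .. t (k + 1) / w} u * enn_powr (ennreal \<bar>f (u + (x - t k / w)) - f x\<bar>) p \<partial>lborel)
    \<le> (\<integral>\<^sup>+s. indicator {0 .. \<Delta> / w} s * ennreal (\<bar>f (x + s) - f x\<bar> powr p) \<partial>lborel)"
proof -
  define F where "F s = indicator {0 .. (t (k + 1) - t k) / w} s * ennreal (\<bar>f (x + s) - f x\<bar> powr p)" for s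
  have [measurable]: "F \<in> borel_measurable borel"
    unfolding F_def by measurable
  have "(\<integral>\<^sup>+u. indicator {t k / w .. t (k + 1) / w} u * enn_powr (ennreal \<bar>f (u + (x - t k / w)) - f x\<bar>) p \<partial>lborel)
      = (\<integral>\<^sup>+u. F (u + - (t k / w)) \<partial>lborel)"
    by (intro nn_integral_cong) (auto simp: F_def indicator_def algebra_simps diff_divide_distrib)
  also have "\<dots> = (\<integral>\<^sup>+s. F s \<partial>lborel)"
    by (rule nn_integral_lborel_translate) measurable
  also have "\<dots> \<le> (\<integral>\<^sup>+s. indicator {0 .. \<Delta> / w} s * ennreal (\<bar>f (x + s) - f x\<bar> powr p) \<partial>lborel)"
  proof -
    have "(t (k + 1) - t k) / w \<le> \<Delta> / w"
      using sampling_seqD(5)[OF samp, of k] w by (simp add: divide_right_mono)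
    then show ?thesis
      unfolding F_def by (intro nn_integral_mono mult_right_mono) (auto simp: indicator_def)
  qed
  finally show ?thesis .
qed

lemma shift_window_integral_le:
  assumes [measurable]: "f \<in> borel_measurable borel" and a: "0 \<le> a" and c: "0 \<le> c"
    and shift: "\<And>s. 0 \<le> s \<Longrightarrow> s \<le> a \<Longrightarrow> (\<integral>\<^sup>+u. ennreal (\<bar>f (u + s) - f u\<bar> powr p) \<partial>lborel) \<le> ennreal c"
  shows "(\<integral>\<^sup>+x. \<integral>\<^sup>+s. indicator {0 .. a} s * ennreal (\<bar>f (x + s) - f x\<bar> powr p) \<partial>lborel \<partial>lborel) \<le> ennreal (c * a)"
proof -
  have "(\<integral>\<^sup>+x. \<integral>\<^sup>+s. indicator {0 .. a} s * ennreal (\<bar>f (x + s) - f x\<bar> powr p) \<partial>lborel \<partial>lborel)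
      = (\<integral>\<^sup>+s. indicator {0 .. a} s * (\<integral>\<^sup>+x. ennreal (\<bar>f (x + s) - f x\<bar> powr p) \<partial>lborel) \<partial>lborel)"
    by (subst lborel_pair.Fubini') (auto simp: nn_integral_cmult)
  also have "\<dots> \<le> (\<integral>\<^sup>+s. ennreal c * indicator {0 .. a} s \<partial>lborel)"
    by (intro nn_integral_mono) (auto simp: indicator_def shift)
  also have "\<dots> = ennreal (c * a)"
    using a c by (simp add: nn_integral_cmult_indicator emeasure_lborel_Icc_eq ennreal_mult[symmetric])
  finally show ?thesis .
qed

lemma local_means_sum_modulus_integral_le:
  assumes p: "1 \<le> p" and samp: "sampling_seq t \<delta> \<Delta>" and w: "0 < w"
    and L_nonneg: "\<And>x. 0 \<le> L x" and m: "0 \<le> m"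
    and L_sum: "\<And>u. (\<integral>\<^sup>+k. ennreal (L (u - t k)) \<partial>count_space UNIV) \<le> ennreal m"
    and [measurable]: "f \<in> borel_measurable borel" and c: "0 \<le> c"
    and shift: "\<And>s. 0 \<le> s \<Longrightarrow> s \<le> \<Delta> / w \<Longrightarrow>
      (\<integral>\<^sup>+u. ennreal (\<bar>f (u + s) - f u\<bar> powr p) \<partial>lborel) \<le> ennreal c"
  shows "(\<integral>\<^sup>+x. enn_powr (local_means_sum t L w (\<lambda>k u. ennreal \<bar>f (u + (x - t k / w)) - f x\<bar>) x) p \<partial>lborel)
    \<le> ennreal (m powr p * \<Delta> / \<delta> * c)"
proof -
  have \<delta>: "0 < \<delta>" "\<delta> \<le> \<Delta>"
    using sampling_seqD[OF samp] by auto
  define \<Psi> where "\<Psi> x = (\<integral>\<^sup>+s. indicator {0 .. \<Delta> / w} s * ennreal (\<bar>f (x + s) - f x\<bar> powr p) \<partial>lborel)" for x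
  have [measurable]: "\<Psi> \<in> borel_measurable borel"
    unfolding \<Psi>_def by measurable
  define C where "C = m powr (p - 1) * (w / \<delta>)"
  have pw: "enn_powr (local_means_sum t L w (\<lambda>k u. ennreal \<bar>f (u + (x - t k / w)) - f x\<bar>) x) p
      \<le> ennreal C * (ennreal m * \<Psi> x)" for x
  proof -
    have "enn_powr (local_means_sum t L w (\<lambda>k u. ennreal \<bar>f (u + (x - t k / w)) - f x\<bar>) x) p
        \<le> ennreal C * (\<integral>\<^sup>+k. ennreal (L (w * x - t k)) * (\<integral>\<^sup>+u. indicator {t k / w .. t (k + 1) / w} u
          * enn_powr (ennreal \<bar>f (u + (x - t k / w)) - f x\<bar>) p \<partial>lborel) \<partial>count_space UNIV)"
      unfolding C_def by (rule local_means_sum_powr_le[OF p samp w L_nonneg m L_sum]) measurable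
    also have "\<dots> \<le> ennreal C * (\<integral>\<^sup>+k. ennreal (L (w * x - t k)) * \<Psi> x \<partial>count_space UNIV)"
      unfolding \<Psi>_def using sampling_window_shift_integral_le[OF samp w \<open>f \<in> borel_measurable borel\<close>]
      by (rule mult_left_mono[OF nn_integral_mono[OF mult_left_mono]]) simp_all
    also have "\<dots> \<le> ennreal C * (ennreal m * \<Psi> x)"
      using L_sum[of "w * x"] by (intro mult_left_mono) (simp_all add: nn_integral_multc mult_right_mono)
    finally show ?thesis .
  qed
  have "(\<integral>\<^sup>+x. enn_powr (local_means_sum t L w (\<lambda>k u. ennreal \<bar>f (u + (x - t k / w)) - f x\<bar>) x) p \<partial>lborel)
      \<le> (\<integral>\<^sup>+x. ennreal C * (ennreal m * \<Psi> x) \<partial>lborel)"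
    using pw by (rule nn_integral_mono)
  also have "\<dots> = ennreal C * ennreal m * (\<integral>\<^sup>+x. \<Psi> x \<partial>lborel)"
    by (simp add: nn_integral_cmult mult.assoc)
  also have "\<dots> \<le> ennreal C * ennreal m * ennreal (c * (\<Delta> / w))"
    unfolding \<Psi>_def using w \<delta> c shift by (intro mult_left_mono shift_window_integral_le) auto
  also have "\<dots> = ennreal (m powr p * \<Delta> / \<delta> * c)"
  proof -
    have "C * m * (c * (\<Delta> / w)) = (m powr (p - 1) * m) * (w / \<delta>) * (c * (\<Delta> / w))"
      by (simp add: C_def mult_ac)
    also have "\<dots> = m powr p * \<Delta> / \<delta> * c"
      unfolding powr_minus_one_mult_self[OF m] using w by (simp add: field_simps)
    finally show ?thesis
      using w \<delta> m c by (simp add: C_def ennreal_mult[symmetric])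
  qed
  finally show ?thesis .
qed

lemma local_means_sum_modulus_Lp_le:
  assumes p: "1 \<le> p" and samp: "sampling_seq t \<delta> \<Delta>" and w: "0 < w"
    and L_nonneg: "\<And>x. 0 \<le> L x" and m: "0 \<le> m"
    and L_sum: "\<And>u. (\<integral>\<^sup>+k. ennreal (L (u - t k)) \<partial>count_space UNIV) \<le> ennreal m"
    and [measurable]: "f \<in> borel_measurable borel" and c: "0 \<le> c"
    and shift: "\<And>s. 0 \<le> s \<Longrightarrow> s \<le> \<Delta> / w \<Longrightarrow>
      (\<integral>\<^sup>+u. ennreal (\<bar>f (u + s) - f u\<bar> powr p) \<partial>lborel) \<le> ennreal (c powr p)"
  shows "(\<integral>\<^sup>+x. enn_powr (local_means_sum t L w (\<lambda>k u. ennreal \<bar>f (u + (x - t k / w)) - f x\<bar>) x) p \<partial>lborel)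
    \<le> ennreal ((\<delta> powr (- 1 / p) * m * \<Delta> powr (1 / p) * c) powr p)"
proof -
  have \<delta>: "0 < \<delta>" "\<delta> \<le> \<Delta>"
    using sampling_seqD[OF samp] by auto
  have "(\<integral>\<^sup>+x. enn_powr (local_means_sum t L w (\<lambda>k u. ennreal \<bar>f (u + (x - t k / w)) - f x\<bar>) x) p \<partial>lborel)
      \<le> ennreal (m powr p * \<Delta> / \<delta> * c powr p)"
    by (rule local_means_sum_modulus_integral_le[OF p samp w L_nonneg m L_sum _ _ shift]) auto
  also have "\<dots> = ennreal ((\<delta> powr (- 1 / p) * m * \<Delta> powr (1 / p) * c) powr p)"
    using p \<delta> m c by (simp add: powr_mult powr_divide powr_divide_exponent_powr powr_inverse_root_powr)
  finally show ?thesis .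
qed

lemma S_w_Lp_error_le:
  assumes p: "1 \<le> p" and samp: "sampling_seq t \<delta> \<Delta>" and w: "0 < w"
    and chi1: "\<And>x u. (\<lambda>k. \<bar>K (w * x - t k) u\<bar>) summable_on UNIV"
    and chi3: "\<And>x u v. \<bar>K x u - K x v\<bar> \<le> L x * \<bar>u - v\<bar>"
    and [measurable]: "L \<in> borel_measurable borel" and L_nonneg: "\<And>x. 0 \<le> L x"
    and m: "0 \<le> m" and L_sum: "\<And>u. (\<integral>\<^sup>+k. ennreal (L (u - t k)) \<partial>count_space UNIV) \<le> ennreal m"
    and L_int: "integrable lborel L" and Mp: "integrable lborel (\<lambda>u. L u * \<bar>u\<bar> powr p)"
    and f: "in_Lp p f" and \<tau>: "0 \<le> \<tau>"
    and defect: "\<And>x. \<bar>(\<Sum>\<^sub>\<infinity>k. K (w * x - t k) (f x)) - f x\<bar> \<le> \<tau> * \<bar>f x\<bar>"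
    and c1: "0 \<le> c1" and shift_scaled: "\<And>y. (\<integral>\<^sup>+u. ennreal (\<bar>f (u + y / w) - f u\<bar> powr p) \<partial>lborel)
      \<le> ennreal (c1 powr p * (1 + \<bar>y\<bar> powr p))"
    and c2: "0 \<le> c2" and shift_small: "\<And>s. 0 \<le> s \<Longrightarrow> s \<le> \<Delta> / w \<Longrightarrow>
      (\<integral>\<^sup>+u. ennreal (\<bar>f (u + s) - f u\<bar> powr p) \<partial>lborel) \<le> ennreal (c2 powr p)"
  shows "Lp_norm p (\<lambda>x. S_w K t w f x - f x) \<le> ennreal
    (\<delta> powr (- 1 / p) * m powr ((p - 1) / p)
       * ((LINT u|lborel. L u) + (LINT u|lborel. L u * \<bar>u\<bar> powr p)) powr (1 / p) * c1
     + \<delta> powr (- 1 / p) * m * \<Delta> powr (1 / p) * c2 + \<tau> * enn2real (Lp_norm p f))"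
    (is "_ \<le> ennreal (?B1 + ?B2 + ?B3)")
proof -
  have [measurable]: "f \<in> borel_measurable borel"
    using f by (simp add: in_Lp_def)
  define J1 where "J1 x = local_means_sum t L w (\<lambda>k u. ennreal \<bar>f u - f (u + (x - t k / w))\<bar>) x" for x
  define J2 where "J2 x = local_means_sum t L w (\<lambda>k u. ennreal \<bar>f (u + (x - t k / w)) - f x\<bar>) x" for x
  have [measurable]: "J1 \<in> borel_measurable borel" "J2 \<in> borel_measurable borel"
    unfolding J1_def[abs_def] J2_def[abs_def] by (intro borel_measurable_local_means_sum; measurable)+
  have pw: "ennreal (\<bar>S_w K t w f x - f x\<bar> powr p) \<le> enn_powr (J1 x + J2 x + ennreal (\<tau> * \<bar>f x\<bar>)) p" for x
  proof -
    have "local_means_sum t L w (\<lambda>k u. ennreal \<bar>f u - f x\<bar>) x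
        \<le> local_means_sum t L w (\<lambda>k u. ennreal \<bar>f u - f (u + (x - t k / w))\<bar> + ennreal \<bar>f (u + (x - t k / w)) - f x\<bar>) x"
      by (intro local_means_sum_mono) (simp add: ennreal_plus[symmetric] ennreal_leI del: ennreal_plus)
    also have "\<dots> = J1 x + J2 x"
      unfolding J1_def J2_def by (intro local_means_sum_add) measurable
    finally have "ennreal \<bar>S_w K t w f x - f x\<bar> \<le> J1 x + J2 x + ennreal (\<tau> * \<bar>f x\<bar>)"
      using S_w_pointwise_le[OF p f w samp chi1 chi3 L_nonneg defect] add_right_mono order.trans by metis
    then show ?thesis
      using enn_powr_mono[of p] p by fastforce
  qed
  have B: "0 \<le> ?B1" "0 \<le> ?B2" "0 \<le> ?B3"
    using m c1 c2 \<tau> by auto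
  have "(\<integral>\<^sup>+x. enn_powr (J1 x) p \<partial>lborel) \<le> ennreal (?B1 powr p)"
    unfolding J1_def
    by (rule local_means_sum_translation_Lp_le[OF p samp w L_nonneg _ m L_sum L_int Mp _ c1 shift_scaled]) measurable
  moreover have "(\<integral>\<^sup>+x. enn_powr (J2 x) p \<partial>lborel) \<le> ennreal (?B2 powr p)"
    unfolding J2_def by (rule local_means_sum_modulus_Lp_le[OF p samp w L_nonneg m L_sum _ c2 shift_small]) measurable
  ultimately have "(\<integral>\<^sup>+x. enn_powr (J1 x + J2 x) p \<partial>lborel) \<le> ennreal ((?B1 + ?B2) powr p)"
    using B by (intro Minkowski_nn_integral_powr[OF p]) auto
  then have "(\<integral>\<^sup>+x. enn_powr (J1 x + J2 x + ennreal (\<tau> * \<bar>f x\<bar>)) p \<partial>lborel) \<le> ennreal ((?B1 + ?B2 + ?B3) powr p)"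
    using p \<tau> B in_Lp_scaled_nn_integral_eq[OF _ f \<tau>]
    by (intro Minkowski_nn_integral_powr[OF p, of "\<lambda>x. J1 x + J2 x" _ "\<lambda>x. ennreal (\<tau> * \<bar>f x\<bar>)"]) auto
  then have "(\<integral>\<^sup>+x. ennreal (\<bar>S_w K t w f x - f x\<bar> powr p) \<partial>lborel) \<le> ennreal ((?B1 + ?B2 + ?B3) powr p)"
    using nn_integral_mono[OF pw] by (rule order.trans[rotated])
  then show ?thesis
    using p B by (subst Lp_norm_le_ennreal_iff) auto
qed

theorem corollary3p3:
  fixes p \<delta> \<Delta> M2 \<theta>0 \<alpha> C1 :: real
    and t :: "int \<Rightarrow> real"
    and K :: "real \<Rightarrow> real \<Rightarrow> real"
    and L f :: "real \<Rightarrow> real"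
  assumes p: "1 \<le> p"
    and samp: "sampling_seq t \<delta> \<Delta>"
    and chi1: "\<And>x u w. w > 0 \<Longrightarrow> (\<lambda>k. \<bar>K (w * x - t k) u\<bar>) summable_on UNIV"
    and chi2: "\<And>x. K x 0 = 0"
    and L_meas: "L \<in> borel_measurable lborel"
    and L_nonneg: "\<And>x. 0 \<le> L x"
    and chi3: "\<And>x u v. \<bar>K x u - K x v\<bar> \<le> L x * \<bar>u - v\<bar>"
    and L1_int: "integrable lborel L"
    and L1_bdd: "\<exists>r>0. \<exists>B. \<forall>x. \<bar>x\<bar> < r \<longrightarrow> L x \<le> B"
    and L2: "\<exists>\<beta>0>0. \<exists>B. \<forall>u. (\<lambda>k. L (u - t k) * \<bar>u - t k\<bar> powr \<beta>0) summable_on UNIV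
                          \<and> (\<Sum>\<^sub>\<infinity>k. L (u - t k) * \<bar>u - t k\<bar> powr \<beta>0) \<le> B"
    and Mp: "integrable lborel (\<lambda>u. L u * \<bar>u\<bar> powr p)"
    and M2: "M2 > 0" and th0: "\<theta>0 > 0"
    and chi4: "\<forall>\<^sub>F w in at_top. \<forall>x. T_w K t w x \<le> ennreal (M2 * w powr (- \<theta>0))"
    and alpha: "0 < \<alpha>" "\<alpha> \<le> 1"
    and C1: "C1 > 0"
    and f: "Lip_with \<alpha> p C1 f"
  shows "\<forall>\<^sub>F w in at_top.
     Lp_norm p (\<lambda>x. S_w K t w f x - f x) \<le> ennreal
       (\<delta> powr (- 1 / p) * (2 * m0 t L) powr ((p - 1) / p)
          * ((integral\<^sup>L lborel L) + (integral\<^sup>L lborel (\<lambda>u. L u * \<bar>u\<bar> powr p))) powr (1 / p)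
          * C1 * (1 / w powr \<alpha>)
        + \<delta> powr (- 1 / p) * m0 t L * C1 * \<Delta> powr (1 / p) * (\<Delta> / w) powr \<alpha>
        + M2 * enn2real (Lp_norm p f) * w powr (- \<theta>0))"
proof -
  have f_Lp: "in_Lp p f" and L_borel: "L \<in> borel_measurable borel"
    using f L_meas by (simp_all add: Lip_with_def)
  note m0 = m0_nonneg[OF samp L_nonneg L1_bdd L2] and L_sum = translates_sum_le_m0[OF samp L_nonneg L1_bdd L2]
  define Q where "Q = (LINT u|lborel. L u) + (LINT u|lborel. L u * \<bar>u\<bar> powr p)"
  show ?thesis
    using eventually_gt_at_top[of 0] chi4 Lip_with_scaled_shift_le[OF p alpha C1 f]
      Lip_with_eventually_small_shift_le[OF p alpha C1 f, of \<Delta>]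
  proof eventually_elim
    case (elim w)
    then have w: "0 < w"
      by simp
    have "Lp_norm p (\<lambda>x. S_w K t w f x - f x) \<le> ennreal
      (\<delta> powr (- 1 / p) * m0 t L powr ((p - 1) / p) * Q powr (1 / p) * (C1 * w powr (- \<alpha>))
       + \<delta> powr (- 1 / p) * m0 t L * \<Delta> powr (1 / p) * (C1 * (\<Delta> / w) powr \<alpha>)
       + M2 * w powr (- \<theta>0) * enn2real (Lp_norm p f))"
      unfolding Q_def
    proof (rule S_w_Lp_error_le[OF p samp w chi1[OF w] chi3 L_borel L_nonneg m0 L_sum L1_int Mp f_Lp])
      show "\<bar>(\<Sum>\<^sub>\<infinity>k. K (w * x - t k) (f x)) - f x\<bar> \<le> M2 * w powr (- \<theta>0) * \<bar>f x\<bar>" for x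
        using elim M2 by (intro kernel_sum_dist_le[of K, OF chi2]) auto
    qed (use elim M2 C1 in auto)
    also have "\<dots> \<le> ennreal
      (\<delta> powr (- 1 / p) * (2 * m0 t L) powr ((p - 1) / p) * Q powr (1 / p) * C1 * (1 / w powr \<alpha>)
       + \<delta> powr (- 1 / p) * m0 t L * C1 * \<Delta> powr (1 / p) * (\<Delta> / w) powr \<alpha>
       + M2 * enn2real (Lp_norm p f) * w powr (- \<theta>0))"
    proof (intro ennreal_leI add_mono order.refl)
      have "m0 t L powr ((p - 1) / p) * (\<delta> powr (- 1 / p) * Q powr (1 / p) * C1 * (1 / w powr \<alpha>))
          \<le> (2 * m0 t L) powr ((p - 1) / p) * (\<delta> powr (- 1 / p) * Q powr (1 / p) * C1 * (1 / w powr \<alpha>))"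
        using m0 p C1 by (intro mult_right_mono powr_mono2) auto
      then show "\<delta> powr (- 1 / p) * m0 t L powr ((p - 1) / p) * Q powr (1 / p) * (C1 * w powr (- \<alpha>))
          \<le> \<delta> powr (- 1 / p) * (2 * m0 t L) powr ((p - 1) / p) * Q powr (1 / p) * C1 * (1 / w powr \<alpha>)"
        by (simp add: powr_minus_divide mult_ac)
    qed (simp_all add: mult_ac)
    finally show ?case
      unfolding Q_def .
  qed
qed

end
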